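(* Let $G$ be a connected graph and let $u,v\in V(G)$. (a) Suppose $u$ and $v$ are adjacent in $G$ and let $T,T'$ be search trees on $G$. Then $u$ and $v$ have different relative order in $T$ and $T'$ if and only if every sequence of rotations transforming $T$ into $T'$ contains an odd number of $uv$-rotations. (b) If $u$ and $v$ are true twins in $G$ and $T,T'$ are search trees on $G$, then every minimum length $TT'$-path in $\mathcal{R}(G)$ has exactly one edge determined by a $uv$-rotation if $u$ and $v$ have different relative orders in $T$ and $T'$, and no edge determined by a $uv$-rotation if $u$ and $v$ have the same relative order in $T$ and $T'$.
   Context: For a connected graph $G$, a search tree on $G$ is a rooted tree with vertex set $V(G)$ defined recursively: its root is some vertex $r\in V(G)$, and the children of $r$ are the roots of search trees on the connected components of $G-r$. For a rooted tree $T$ and $w\in V(T)$, $T|w$ denotes the subtree rooted at $w$. Let $T$ be a search tree on $G$, let $b$ be a child of $a$ in $T$, and let $p$ be the parent of $a$ (if it exists). The $ab$-rotation (also called a rotation of the pair $a,b$) transforms $T$ into the search tree $T'$ in which: $a$ is a child of $b$ and $b$ is a child of $p$ (or $b$ is the root if $a$ was the root); every subtree of $a$ in $T$ other than $T|b$ is a subtree of $a$ in $T'$; and every subtree $S$ of $b$ in $T$ is a subtree of $a$ in $T'$ if $a$ is adjacent in $G$ to some vertex of $S$, and a subtree of $b$ in $T'$ otherwise. The rotation graph $\mathcal{R}(G)$ has the search trees on $G$ as vertices, two adjacent iff they differ by one rotation. If $u$ is an ancestor of $v$ in $T$ and a descendant of $v$ in $T'$ (or vice versa), $u,v$ have different relative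 order in $T$ and $T'$; if $u$ is an ancestor of $v$ in both, or a descendant of $v$ in both, they have the same relative order. True twins: vertices with equal closed neighbourhoods. *)

theory Defs
  imports Main
begin

definition simple_graph :: "'a set \<Rightarrow> ('a \<Rightarrow> 'a \<Rightarrow> bool) \<Rightarrow> bool" where
  "simple_graph V E \<longleftrightarrow> finite V \<and>
     (\<forall>x y. E x y \<longrightarrow> x \<in> V \<and> y \<in> V \<and> x \<noteq> y \<and> E y x)"

definition reach_in :: "('a \<Rightarrow> 'a \<Rightarrow> bool) \<Rightarrow> 'a set \<Rightarrow> 'a \<Rightarrow> 'a \<Rightarrow> bool" where
  "reach_in E S x y \<longleftrightarrow> x \<in> S \<and> (x, y) \<in> {(a, b). a \<in> S \<and> b \<in> S \<and> E a b}\<^sup>*"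

definition connected_on :: "('a \<Rightarrow> 'a \<Rightarrow> bool) \<Rightarrow> 'a set \<Rightarrow> bool" where
  "connected_on E S \<longleftrightarrow> S \<noteq> {} \<and> (\<forall>x\<in>S. \<forall>y\<in>S. reach_in E S x y)"

definition components :: "('a \<Rightarrow> 'a \<Rightarrow> bool) \<Rightarrow> 'a set \<Rightarrow> 'a set set" where
  "components E S = {{y. reach_in E S x y} | x. x \<in> S}"

text \<open>A rooted tree is represented by its parent map: p x = Some y iff y is the
  parent of x; the root and all vertices outside the tree are mapped to None.\<close>

definition anc :: "('a \<Rightarrow> 'a option) \<Rightarrow> 'a \<Rightarrow> 'a \<Rightarrow> bool" where
  "anc p u v \<longleftrightarrow> (v, u) \<in> {(x, y). p x = Some y}\<^sup>+"  \<comment> \<open>u is a proper ancestor of v\<close>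

definition in_subtree :: "('a \<Rightarrow> 'a option) \<Rightarrow> 'a \<Rightarrow> 'a \<Rightarrow> bool" where
  "in_subtree p w y \<longleftrightarrow> y = w \<or> anc p w y"

inductive stree :: "('a \<Rightarrow> 'a \<Rightarrow> bool) \<Rightarrow> 'a set \<Rightarrow> ('a \<Rightarrow> 'a option) \<Rightarrow> bool" for E where
  "\<lbrakk> r \<in> S; connected_on E S; p r = None; \<forall>x. x \<notin> S \<longrightarrow> p x = None;
     \<forall>C \<in> components E (S - {r}). \<exists>c \<in> C. p c = Some r \<and>
         stree E C (\<lambda>x. if x \<in> C \<and> x \<noteq> c then p x else None) \<rbrakk>
   \<Longrightarrow> stree E S p"

text \<open>The ab-rotation (b a child of a).\<close>
definition rot :: "('a \<Rightarrow> 'a \<Rightarrow> bool) \<Rightarrow> ('a \<Rightarrow> 'a option) \<Rightarrow> 'a \<Rightarrow> 'a \<Rightarrow> ('a \<Rightarrow> 'a option)" where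
  "rot E p a b = (\<lambda>x.
     if x = b then p a
     else if x = a then Some b
     else if p x = Some b then
       (if \<exists>y. in_subtree p x y \<and> E a y then Some a else Some b)
     else p x)"

definition is_rotation :: "('a \<Rightarrow> 'a \<Rightarrow> bool) \<Rightarrow> ('a \<Rightarrow> 'a option) \<Rightarrow> 'a \<Rightarrow> 'a \<Rightarrow> ('a \<Rightarrow> 'a option) \<Rightarrow> bool" where
  "is_rotation E p a b q \<longleftrightarrow> p b = Some a \<and> q = rot E p a b"

fun rot_seq :: "'a set \<Rightarrow> ('a \<Rightarrow> 'a \<Rightarrow> bool) \<Rightarrow> ('a \<Rightarrow> 'a option) \<Rightarrow> ('a \<times> 'a) list
                 \<Rightarrow> ('a \<Rightarrow> 'a option) \<Rightarrow> bool" where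
  "rot_seq V E p [] q \<longleftrightarrow> stree E V p \<and> p = q"
| "rot_seq V E p ((a, b) # ps) q \<longleftrightarrow> stree E V p \<and> p b = Some a \<and> rot_seq V E (rot E p a b) ps q"

definition is_pair :: "'a \<Rightarrow> 'a \<Rightarrow> 'a \<times> 'a \<Rightarrow> bool" where
  "is_pair u v ab \<longleftrightarrow> ab = (u, v) \<or> ab = (v, u)"

definition R_edge :: "'a set \<Rightarrow> ('a \<Rightarrow> 'a \<Rightarrow> bool) \<Rightarrow> ('a \<Rightarrow> 'a option) \<Rightarrow> ('a \<Rightarrow> 'a option) \<Rightarrow> bool" where
  "R_edge V E p q \<longleftrightarrow> stree E V p \<and> stree E V q \<and>
     (\<exists>a b. is_rotation E p a b q \<or> is_rotation E q a b p)"

definition uv_edge :: "('a \<Rightarrow> 'a \<Rightarrow> bool) \<Rightarrow> 'a \<Rightarrow> 'a \<Rightarrow> ('a \<Rightarrow> 'a option) \<Rightarrow> ('a \<Rightarrow> 'a option) \<Rightarrow> bool" where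
  "uv_edge E u v p q \<longleftrightarrow> (\<exists>a b. is_pair u v (a, b) \<and> (is_rotation E p a b q \<or> is_rotation E q a b p))"

text \<open>A path in R(G) from p to q, given as its list of vertices; its length is length - 1.\<close>
definition R_path :: "'a set \<Rightarrow> ('a \<Rightarrow> 'a \<Rightarrow> bool) \<Rightarrow> ('a \<Rightarrow> 'a option) list
                      \<Rightarrow> ('a \<Rightarrow> 'a option) \<Rightarrow> ('a \<Rightarrow> 'a option) \<Rightarrow> bool" where
  "R_path V E xs p q \<longleftrightarrow> xs \<noteq> [] \<and> hd xs = p \<and> last xs = q \<and> stree E V p \<and>
     (\<forall>i. Suc i < length xs \<longrightarrow> R_edge V E (xs ! i) (xs ! Suc i))"

definition min_R_path where
  "min_R_path V E xs p q \<longleftrightarrow> R_path V E xs p q \<and>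
     (\<forall>ys. R_path V E ys p q \<longrightarrow> length xs \<le> length ys)"

definition num_uv_edges where
  "num_uv_edges E u v xs = card {i. Suc i < length xs \<and> uv_edge E u v (xs ! i) (xs ! Suc i)}"

definition diff_order where
  "diff_order T T' u v \<longleftrightarrow> (anc T u v \<and> anc T' v u) \<or> (anc T v u \<and> anc T' u v)"

definition same_order where
  "same_order T T' u v \<longleftrightarrow> (anc T u v \<and> anc T' u v) \<or> (anc T v u \<and> anc T' v u)"

definition true_twins :: "'a set \<Rightarrow> ('a \<Rightarrow> 'a \<Rightarrow> bool) \<Rightarrow> 'a \<Rightarrow> 'a \<Rightarrow> bool" where
  "true_twins V E u v \<longleftrightarrow> {x \<in> V. x = u \<or> E u x} = {x \<in> V. x = v \<or> E v x}"

end

theory Submission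
  imports Defs "HOL-Combinatorics.Transposition"
begin

text \<open>
  Search trees are handled through a closed-form characterisation, equivalent to the recursive
  definition: a rooted tree on the vertex set in which adjacent vertices are comparable and every
  subtree induces a connected subgraph. Rotations preserve it.

  (a) An ab-rotation reverses the relative order of a and b and keeps the relative order of every
  other pair that is comparable before and after it. Adjacent vertices are comparable in every
  search tree, so along any rotation sequence the relative order of adjacent u and v changes
  exactly at the uv-rotations. Some rotation sequence from T to T' exists: working down T' from
  the root, each vertex is rotated upwards in T until its parent is the one it has in T'.

  (b) For true twins u and v the transposition \<sigma> = (u v) is an automorphism of the graph, and a
  uv-rotation maps a search tree T to its relabelling \<sigma>T. Relabelling by \<sigma> the part of a path
  between two uv-edges therefore yields a shorter path with the same ends, so a shortest path
  has at most one uv-edge, and the parity argument of (a) decides between zero and one.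
\<close>

definition parent_rel :: "('a \<Rightarrow> 'a option) \<Rightarrow> 'a rel" where
  "parent_rel p = {(x, y). p x = Some y}"

definition subtree :: "('a \<Rightarrow> 'a option) \<Rightarrow> 'a \<Rightarrow> 'a set" where
  "subtree p w = {y. (y, w) \<in> (parent_rel p)\<^sup>*}"

lemma parent_rel_iff [simp]: "(x, y) \<in> parent_rel p \<longleftrightarrow> p x = Some y"
  by (simp add: parent_rel_def)

lemma mem_subtree_iff [simp]: "y \<in> subtree p w \<longleftrightarrow> (y, w) \<in> (parent_rel p)\<^sup>*"
  by (simp add: subtree_def)

lemma anc_iff_trancl: "anc p u v \<longleftrightarrow> (v, u) \<in> (parent_rel p)\<^sup>+"
  by (simp add: anc_def parent_rel_def)

lemma in_subtree_iff: "in_subtree p w y \<longleftrightarrow> y \<in> subtree p w"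
  by (auto simp: in_subtree_def anc_iff_trancl rtrancl_eq_or_trancl)

lemma single_valued_parent_rel: "single_valued (parent_rel p)"
  by (auto intro: single_valuedI)

lemma parent_rel_confluent:
  "(x, y) \<in> (parent_rel p)\<^sup>* \<Longrightarrow> (x, z) \<in> (parent_rel p)\<^sup>* \<Longrightarrow>
   (y, z) \<in> (parent_rel p)\<^sup>* \<or> (z, y) \<in> (parent_rel p)\<^sup>*"
  using single_valued_confluent[OF single_valued_parent_rel] .

lemma parent_rel_mono: "p \<subseteq>\<^sub>m q \<Longrightarrow> parent_rel p \<subseteq> parent_rel q"
  by (force simp: map_le_def)

lemma rtrancl_parent_from_root: "p r = None \<Longrightarrow> (r, z) \<in> (parent_rel p)\<^sup>* \<longleftrightarrow> z = r"
  by (auto elim: converse_rtranclE)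

lemma trancl_parent_step:
  "p x = Some y \<Longrightarrow> (x, z) \<in> (parent_rel p)\<^sup>+ \<longleftrightarrow> (y, z) \<in> (parent_rel p)\<^sup>*"
  by (auto simp: trancl_unfold_left)

lemma acyclic_parent_relI:
  assumes "p r = None" and "\<And>x. p x \<noteq> None \<Longrightarrow> x \<in> subtree p r"
  shows "acyclic (parent_rel p)"
proof (rule acyclicI, intro allI notI)
  fix x assume "(x, x) \<in> (parent_rel p)\<^sup>+"
  then have "p x \<noteq> None" by (auto elim: converse_tranclE)
  then have "(x, r) \<in> (parent_rel p)\<^sup>*" using assms(2) by simp
  then show False using \<open>(x, x) \<in> _\<close>
  proof (induction rule: converse_rtrancl_induct)
    case base then show ?case using \<open>p r = None\<close> by (auto elim: converse_tranclE)
  next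
    case (step x y)
    then have "p x = Some y" by simp
    with step.prems have "(y, x) \<in> (parent_rel p)\<^sup>*" by (simp add: trancl_parent_step)
    then have "(y, y) \<in> (parent_rel p)\<^sup>+" using step.hyps(1) by (rule rtrancl_into_trancl1)
    then show ?case by (rule step.IH)
  qed
qed

lemma acyclic_parent_rel_no_loop: "acyclic (parent_rel p) \<Longrightarrow> p x \<noteq> Some x"
  by (metis acyclic_def parent_rel_iff r_into_trancl')

lemma acyclic_trancl_asym:
  "acyclic r \<Longrightarrow> (x, y) \<in> r\<^sup>+ \<Longrightarrow> (y, x) \<notin> r\<^sup>+"
  by (meson acyclic_def trancl_trans)

definition induced_edges :: "('a \<Rightarrow> 'a \<Rightarrow> bool) \<Rightarrow> 'a set \<Rightarrow> 'a rel" where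
  "induced_edges E S = {(a, b). a \<in> S \<and> b \<in> S \<and> E a b}"

lemma reach_in_iff: "reach_in E S x y \<longleftrightarrow> x \<in> S \<and> (x, y) \<in> (induced_edges E S)\<^sup>*"
  by (simp add: reach_in_def induced_edges_def)

lemma reach_in_mem:
  assumes "reach_in E S x y"
  shows "x \<in> S" "y \<in> S"
proof -
  show "x \<in> S" using assms by (simp add: reach_in_iff)
  have "(x, y) \<in> (induced_edges E S)\<^sup>*" using assms by (simp add: reach_in_iff)
  then show "y \<in> S" using \<open>x \<in> S\<close>
    by (induction rule: rtrancl_induct) (auto simp: induced_edges_def)
qed

lemma reach_in_refl: "x \<in> S \<Longrightarrow> reach_in E S x x"
  by (simp add: reach_in_iff)

lemma reach_in_trans: "reach_in E S x y \<Longrightarrow> reach_in E S y z \<Longrightarrow> reach_in E S x z"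
  by (auto simp: reach_in_iff)

lemma reach_in_edge: "x \<in> S \<Longrightarrow> y \<in> S \<Longrightarrow> E x y \<Longrightarrow> reach_in E S x y"
  by (auto simp: reach_in_iff induced_edges_def)

lemma reach_in_sym:
  assumes "symp E" and "reach_in E S x y"
  shows "reach_in E S y x"
proof -
  have "sym (induced_edges E S)" using assms(1) by (auto simp: sym_def induced_edges_def dest: sympD)
  then have "(y, x) \<in> (induced_edges E S)\<^sup>*"
    using assms(2) by (simp add: reach_in_iff symD[OF sym_rtrancl])
  then show ?thesis using reach_in_mem(2)[OF assms(2)] by (simp add: reach_in_iff)
qed

lemma reach_in_mono: "reach_in E S x y \<Longrightarrow> S \<subseteq> S' \<Longrightarrow> reach_in E S' x y"
proof -
  assume "reach_in E S x y" "S \<subseteq> S'"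
  moreover have "induced_edges E S \<subseteq> induced_edges E S'"
    using \<open>S \<subseteq> S'\<close> by (auto simp: induced_edges_def)
  ultimately show ?thesis by (auto simp: reach_in_iff dest: rtrancl_mono)
qed

lemma reach_in_closed:
  assumes "reach_in E S x y" "x \<in> X"
    and "\<And>a b. a \<in> X \<Longrightarrow> a \<in> S \<Longrightarrow> b \<in> S \<Longrightarrow> E a b \<Longrightarrow> b \<in> X"
  shows "y \<in> X"
proof -
  have "(x, y) \<in> (induced_edges E S)\<^sup>*" using assms(1) by (simp add: reach_in_iff)
  then show ?thesis
  proof (induction rule: rtrancl_induct)
    case (step y z)
    then show ?case using assms(3)[of y z] by (simp add: induced_edges_def)
  qed (rule assms(2))
qed

lemma reach_in_exit:
  assumes "reach_in E S x y" "x \<in> X" "y \<notin> X"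
  obtains a b where "a \<in> S \<inter> X" "b \<in> S - X" "E a b"
  using reach_in_closed[OF assms(1,2)] assms(3) by blast

lemma connected_onI:
  assumes "symp E" "a \<in> S" "\<And>y. y \<in> S \<Longrightarrow> reach_in E S y a"
  shows "connected_on E S"
  unfolding connected_on_def
proof (intro conjI ballI)
  show "S \<noteq> {}" using assms(2) by blast
  fix x y assume "x \<in> S" "y \<in> S"
  have "reach_in E S a y" using reach_in_sym[OF assms(1) assms(3)[OF \<open>y \<in> S\<close>]] .
  with assms(3)[OF \<open>x \<in> S\<close>] show "reach_in E S x y" by (rule reach_in_trans)
qed

lemma connected_onD: "connected_on E S \<Longrightarrow> x \<in> S \<Longrightarrow> y \<in> S \<Longrightarrow> reach_in E S x y"
  by (simp add: connected_on_def)

definition component :: "('a \<Rightarrow> 'a \<Rightarrow> bool) \<Rightarrow> 'a set \<Rightarrow> 'a \<Rightarrow> 'a set" where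
  "component E S x = {y. reach_in E S x y}"

lemma components_iff: "C \<in> components E S \<longleftrightarrow> (\<exists>x\<in>S. C = component E S x)"
  by (auto simp: components_def component_def)

lemma component_subset: "component E S x \<subseteq> S"
  by (auto simp: component_def dest: reach_in_mem(2))

lemma components_subset:
  assumes "C \<in> components E S"
  shows "C \<subseteq> S"
proof -
  obtain x where "C = component E S x" using assms by (auto simp: components_iff)
  then show ?thesis by (simp add: component_subset)
qed

lemma mem_component_self: "x \<in> S \<Longrightarrow> x \<in> component E S x"
  by (simp add: component_def reach_in_refl)

lemma mem_component_edge: "x \<in> S \<Longrightarrow> y \<in> S \<Longrightarrow> E x y \<Longrightarrow> y \<in> component E S x"
  by (simp add: component_def reach_in_edge)

lemma component_eq:
  assumes "symp E" "y \<in> component E S x"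
  shows "component E S y = component E S x"
proof -
  have "reach_in E S x y" using assms(2) by (simp add: component_def)
  moreover from this have "reach_in E S y x" by (rule reach_in_sym[OF assms(1)])
  ultimately show ?thesis
    unfolding component_def using reach_in_trans[of E S x y] reach_in_trans[of E S y x] by blast
qed

lemma components_eq_component:
  assumes "symp E" "C \<in> components E S" "x \<in> C"
  shows "C = component E S x"
  using assms component_eq[OF assms(1)] by (auto simp: components_iff)

lemma reach_in_image:
  assumes hom: "\<And>x y. E x y \<Longrightarrow> E (s x) (s y)" and "reach_in E X x y"
  shows "reach_in E (s ` X) (s x) (s y)"
proof -
  have "x \<in> X" "(x, y) \<in> (induced_edges E X)\<^sup>*" using assms(2) by (simp_all add: reach_in_iff)
  from this(2) have "(s x, s y) \<in> (induced_edges E (s ` X))\<^sup>*"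
  proof (induction rule: rtrancl_induct)
    case (step y z)
    then have "(s y, s z) \<in> induced_edges E (s ` X)" using hom by (auto simp: induced_edges_def)
    then show ?case by (rule rtrancl_into_rtrancl[OF step.IH])
  qed simp
  then show ?thesis using \<open>x \<in> X\<close> by (simp add: reach_in_iff)
qed

lemma connected_on_image:
  assumes "\<And>x y. E x y \<Longrightarrow> E (s x) (s y)" and "connected_on E X"
  shows "connected_on E (s ` X)"
  using assms reach_in_image[of E s] unfolding connected_on_def by blast

section \<open>A non-recursive characterisation of search trees\<close>

definition search_tree :: "('a \<Rightarrow> 'a \<Rightarrow> bool) \<Rightarrow> 'a set \<Rightarrow> ('a \<Rightarrow> 'a option) \<Rightarrow> bool" where
  "search_tree E S p \<longleftrightarrow> dom p \<subseteq> S \<and> (\<exists>r. p r = None \<and> subtree p r = S) \<and>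
     (\<forall>x\<in>S. \<forall>y\<in>S. E x y \<longrightarrow> (x, y) \<in> (parent_rel p)\<^sup>+ \<or> (y, x) \<in> (parent_rel p)\<^sup>+) \<and>
     (\<forall>w\<in>S. connected_on E (subtree p w))"

lemma search_treeI:
  assumes "\<And>x. x \<notin> S \<Longrightarrow> p x = None" and "p r = None" and "subtree p r = S"
    and "\<And>x y. x \<in> S \<Longrightarrow> y \<in> S \<Longrightarrow> E x y \<Longrightarrow>
           (x, y) \<in> (parent_rel p)\<^sup>+ \<or> (y, x) \<in> (parent_rel p)\<^sup>+"
    and "\<And>w. w \<in> S \<Longrightarrow> connected_on E (subtree p w)"
  shows "search_tree E S p"
  unfolding search_tree_def
proof (intro conjI exI[of _ r] ballI impI)
  show "dom p \<subseteq> S" using assms(1) by (meson domIff subsetI)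
qed (use assms(2-5) in simp_all)

context
  fixes E :: "'a \<Rightarrow> 'a \<Rightarrow> bool" and S :: "'a set" and p :: "'a \<Rightarrow> 'a option"
  assumes st: "search_tree E S p"
begin

lemma search_tree_outside: "x \<notin> S \<Longrightarrow> p x = None"
  using st unfolding search_tree_def dom_def by blast

lemma search_tree_root:
  obtains r where "p r = None" "subtree p r = S"
  using st unfolding search_tree_def by blast

lemma search_tree_edge:
  "x \<in> S \<Longrightarrow> y \<in> S \<Longrightarrow> E x y \<Longrightarrow> (x, y) \<in> (parent_rel p)\<^sup>+ \<or> (y, x) \<in> (parent_rel p)\<^sup>+"
  using st by (simp add: search_tree_def)

lemma search_tree_subtree_connected: "w \<in> S \<Longrightarrow> connected_on E (subtree p w)"
  using st by (simp add: search_tree_def)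

lemma search_tree_parent_mem:
  assumes "p x = Some y"
  shows "x \<in> S" "y \<in> S"
proof -
  show "x \<in> S" using assms search_tree_outside by fastforce
  obtain r where r: "p r = None" "subtree p r = S" by (rule search_tree_root)
  with \<open>x \<in> S\<close> have "(x, r) \<in> (parent_rel p)\<^sup>*" by auto
  moreover have "x \<noteq> r" using assms r(1) by auto
  ultimately have "(y, r) \<in> (parent_rel p)\<^sup>*"
    using assms trancl_parent_step by (metis rtrancl_eq_or_trancl)
  then show "y \<in> S" using r(2) by auto
qed

lemma search_tree_trancl_mem:
  assumes "(x, z) \<in> (parent_rel p)\<^sup>+"
  shows "x \<in> S" "z \<in> S"
  using assms search_tree_parent_mem by (auto elim: converse_tranclE tranclE)

lemma search_tree_rtrancl_mem: "x \<in> S \<Longrightarrow> (x, z) \<in> (parent_rel p)\<^sup>* \<Longrightarrow> z \<in> S"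
  using search_tree_trancl_mem by (auto simp: rtrancl_eq_or_trancl)

lemma search_tree_subtree_subset: "w \<in> S \<Longrightarrow> subtree p w \<subseteq> S"
  using search_tree_trancl_mem by (auto simp: rtrancl_eq_or_trancl)

lemma search_tree_acyclic: "acyclic (parent_rel p)"
proof -
  obtain r where r: "p r = None" "subtree p r = S" by (rule search_tree_root)
  show ?thesis
  proof (rule acyclic_parent_relI[of p r])
    fix x assume "p x \<noteq> None"
    then have "x \<in> S" using search_tree_outside by metis
    then show "x \<in> subtree p r" unfolding r(2) .
  qed (rule r(1))
qed

lemma search_tree_not_trancl_self: "(x, x) \<notin> (parent_rel p)\<^sup>+"
  using search_tree_acyclic by (simp add: acyclic_def)

lemma search_tree_root_subtree:
  assumes "p r = None" "r \<in> S"
  shows "subtree p r = S"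
proof -
  obtain r' where r': "p r' = None" "subtree p r' = S" by (rule search_tree_root)
  with assms have "(r, r') \<in> (parent_rel p)\<^sup>*" by auto
  then have "r' = r" using rtrancl_parent_from_root[of p r, OF assms(1)] by simp
  with r' show ?thesis by simp
qed

lemma subtree_eq_component:
  assumes "w \<in> S"
  shows "subtree p w = component E (S - {z. (w, z) \<in> (parent_rel p)\<^sup>+}) w"
  unfolding component_def
proof (intro set_eqI iffI; simp only: mem_Collect_eq)
  let ?A = "{z. (w, z) \<in> (parent_rel p)\<^sup>+}"
  have below: "subtree p w \<subseteq> S - ?A"
  proof
    fix y assume y: "y \<in> subtree p w"
    then have "y \<in> S" using search_tree_subtree_subset[OF assms] by blast
    moreover have "(w, y) \<notin> (parent_rel p)\<^sup>+"
      using y search_tree_not_trancl_self[of w] by (auto dest: trancl_rtrancl_trancl)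
    ultimately show "y \<in> S - ?A" by simp
  qed
  fix y
  show "reach_in E (S - ?A) w y" if "y \<in> subtree p w"
  proof -
    have "reach_in E (subtree p w) w y"
      using search_tree_subtree_connected[OF assms] that by (simp add: connected_onD)
    then show ?thesis using below by (rule reach_in_mono)
  qed
  show "y \<in> subtree p w" if "reach_in E (S - ?A) w y"
  proof (rule reach_in_closed[OF that])
    fix a b assume a: "a \<in> subtree p w" and b: "b \<in> S - ?A" and "a \<in> S - ?A" "E a b"
    then have "(a, b) \<in> (parent_rel p)\<^sup>+ \<or> (b, a) \<in> (parent_rel p)\<^sup>+" by (simp add: search_tree_edge)
    then show "b \<in> subtree p w"
    proof
      assume "(a, b) \<in> (parent_rel p)\<^sup>+"
      then have "(b, w) \<in> (parent_rel p)\<^sup>* \<or> (w, b) \<in> (parent_rel p)\<^sup>*"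
        using parent_rel_confluent[of a b p w] a by (simp add: trancl_into_rtrancl)
      with b show ?thesis by (auto simp: rtrancl_eq_or_trancl)
    qed (use a in simp)
  qed simp
qed

lemma exists_neighbour_in_child_subtree:
  assumes "symp E" and pc: "p c = Some w"
  obtains s where "s \<in> subtree p c" "E w s"
proof -
  have c: "c \<in> S" "c \<in> subtree p w" and w: "w \<in> S"
    using search_tree_parent_mem[OF pc] pc by auto
  have "reach_in E (subtree p w) c w"
    using search_tree_subtree_connected[OF w] c by (simp add: connected_onD)
  moreover have "c \<in> subtree p c" by simp
  moreover have "w \<notin> subtree p c"
    using search_tree_not_trancl_self[of c] trancl_parent_step[of p c w c] pc by simp
  ultimately obtain s t where st: "s \<in> subtree p c" "t \<in> subtree p w - subtree p c" "E s t"
    by (rule reach_in_exit) blast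
  have "t = w"
  proof -
    have "s \<in> S" "t \<in> S"
      using st search_tree_subtree_subset[OF c(1)] search_tree_subtree_subset[OF w] by blast+
    then have "(s, t) \<in> (parent_rel p)\<^sup>+ \<or> (t, s) \<in> (parent_rel p)\<^sup>+"
      using st(3) by (rule search_tree_edge)
    moreover have "(t, s) \<notin> (parent_rel p)\<^sup>+"
      using st(1,2) by (auto dest: trancl_into_rtrancl intro: rtrancl_trans)
    ultimately have "(s, t) \<in> (parent_rel p)\<^sup>*" by auto
    then have "(c, t) \<in> (parent_rel p)\<^sup>*" using parent_rel_confluent[of s t p c] st by auto
    then have "(c, t) \<in> (parent_rel p)\<^sup>+" using st(2) by (auto simp: rtrancl_eq_or_trancl)
    then have wt: "(w, t) \<in> (parent_rel p)\<^sup>*" using trancl_parent_step[of p c w t] pc by simp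
    show "t = w"
    proof (rule ccontr)
      assume "t \<noteq> w"
      with wt have "(w, t) \<in> (parent_rel p)\<^sup>+" by (simp add: rtrancl_eq_or_trancl)
      with st(2) have "(w, w) \<in> (parent_rel p)\<^sup>+" by (auto intro: trancl_rtrancl_trancl)
      then show False using search_tree_not_trancl_self by blast
    qed
  qed
  then show ?thesis using that st assms(1) by (auto dest: sympD)
qed

end

definition restrict_tree :: "('a \<Rightarrow> 'a option) \<Rightarrow> 'a set \<Rightarrow> 'a \<Rightarrow> 'a \<Rightarrow> 'a option" where
  "restrict_tree p C c = (\<lambda>x. if x \<in> C \<and> x \<noteq> c then p x else None)"

lemma restrict_tree_le: "restrict_tree p C c \<subseteq>\<^sub>m p"
  by (auto simp: map_le_def restrict_tree_def split: if_splits)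

lemma rtrancl_restrict_tree_imp:
  assumes "(x, y) \<in> (parent_rel (restrict_tree p C c))\<^sup>*"
  shows "(x, y) \<in> (parent_rel p)\<^sup>*"
  using rtrancl_mono[OF parent_rel_mono[OF restrict_tree_le]] assms by (rule subsetD)

lemma subtree_restrict_tree:
  assumes "acyclic (parent_rel p)" and w: "w \<in> subtree p c"
  shows "subtree (restrict_tree p (subtree p c) c) w = subtree p w"
proof
  let ?q = "restrict_tree p (subtree p c) c"
  show "subtree ?q w \<subseteq> subtree p w" using rtrancl_restrict_tree_imp by fastforce
  show "subtree p w \<subseteq> subtree ?q w"
  proof
    fix y assume "y \<in> subtree p w"
    then have "(y, w) \<in> (parent_rel p)\<^sup>*" by simp
    then show "y \<in> subtree ?q w"
    proof (induction rule: converse_rtrancl_induct)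
      case (step y y')
      have "y \<noteq> c"
      proof
        assume "y = c"
        with step.hyps have "(c, w) \<in> (parent_rel p)\<^sup>+" by (auto intro: rtrancl_into_trancl2)
        with w have "(c, c) \<in> (parent_rel p)\<^sup>+" by (simp add: trancl_rtrancl_trancl)
        with assms(1) show False by (simp add: acyclic_def)
      qed
      moreover have "y \<in> subtree p c"
        using step.hyps w by (auto intro: converse_rtrancl_into_rtrancl rtrancl_trans)
      ultimately have "?q y = Some y'" using step.hyps(1) by (simp add: restrict_tree_def)
      then show ?case using step.IH by (simp add: converse_rtrancl_into_rtrancl)
    qed simp
  qed
qed

context
  fixes E :: "'a \<Rightarrow> 'a \<Rightarrow> bool" and S :: "'a set" and p :: "'a \<Rightarrow> 'a option"
  assumes st: "search_tree E S p"
begin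

lemma search_tree_restrict_subtree:
  assumes "c \<in> S"
  shows "search_tree E (subtree p c) (restrict_tree p (subtree p c) c)"
proof -
  let ?D = "subtree p c" and ?q = "restrict_tree p (subtree p c) c"
  have acyclic: "acyclic (parent_rel p)" by (rule search_tree_acyclic[OF st])
  have trancl_q: "(x, y) \<in> (parent_rel ?q)\<^sup>+ \<longleftrightarrow> (x, y) \<in> (parent_rel p)\<^sup>+" if "y \<in> ?D" for x y
  proof -
    have "(x, y) \<in> (parent_rel ?q)\<^sup>* \<longleftrightarrow> (x, y) \<in> (parent_rel p)\<^sup>*"
      using subtree_restrict_tree[OF acyclic that] by (simp add: set_eq_iff)
    moreover have "acyclic (parent_rel ?q)"
      using acyclic_subset[OF acyclic parent_rel_mono[OF restrict_tree_le]] .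
    ultimately show ?thesis using acyclic by (auto simp: acyclic_def rtrancl_eq_or_trancl)
  qed
  show ?thesis
  proof (rule search_treeI[of _ _ c])
    show "?q x = None" if "x \<notin> ?D" for x using that by (simp add: restrict_tree_def)
    show "?q c = None" by (simp add: restrict_tree_def)
    show "subtree ?q c = ?D" by (rule subtree_restrict_tree[OF acyclic]) simp
  next
    fix x y assume xy: "x \<in> ?D" "y \<in> ?D" "E x y"
    then have "x \<in> S" "y \<in> S" using search_tree_subtree_subset[OF st assms] by blast+
    with xy(3) show "(x, y) \<in> (parent_rel ?q)\<^sup>+ \<or> (y, x) \<in> (parent_rel ?q)\<^sup>+"
      using search_tree_edge[OF st] trancl_q xy(1,2) by blast
  next
    fix w assume "w \<in> ?D"
    moreover have "w \<in> S" using search_tree_subtree_subset[OF st assms] \<open>w \<in> ?D\<close> by blast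
    ultimately show "connected_on E (subtree ?q w)"
      using subtree_restrict_tree[OF acyclic] search_tree_subtree_connected[OF st] by simp
  qed
qed

lemma component_eq_child_subtree:
  assumes "symp E" "p r = None" "p c = Some r" "x \<in> subtree p c"
  shows "component E (S - {r}) x = subtree p c"
proof -
  have "{z. (c, z) \<in> (parent_rel p)\<^sup>+} = {r}"
    using assms(2,3) trancl_parent_step[of p c r] rtrancl_parent_from_root[of p r] by auto
  then have c: "subtree p c = component E (S - {r}) c"
    using subtree_eq_component[OF st search_tree_parent_mem(1)[OF st assms(3)]] by simp
  with assms(4) show ?thesis using component_eq[OF assms(1)] by simp
qed

end

lemma search_tree_imp_stree:
  assumes "finite S" "symp E" "search_tree E S p"
  shows "stree E S p"
  using assms(1,3)
proof (induction S arbitrary: p rule: finite_psubset_induct)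
  case (psubset S)
  note st = psubset.prems
  obtain r where r: "p r = None" "subtree p r = S" using search_tree_root[OF st] by blast
  then have "r \<in> S" by auto
  show ?case
  proof (rule stree.intros[of r])
    show "connected_on E S" using search_tree_subtree_connected[OF st \<open>r \<in> S\<close>] r(2) by simp
    show "\<forall>x. x \<notin> S \<longrightarrow> p x = None" using search_tree_outside[OF st] by blast
    show "\<forall>C\<in>components E (S - {r}). \<exists>c\<in>C. p c = Some r \<and>
            stree E C (\<lambda>x. if x \<in> C \<and> x \<noteq> c then p x else None)"
    proof
      fix C assume "C \<in> components E (S - {r})"
      then obtain x where x: "x \<in> S - {r}" "C = component E (S - {r}) x"
        unfolding components_iff by blast
      then have "(x, r) \<in> (parent_rel p)\<^sup>+" using r(2) by (auto simp: rtrancl_eq_or_trancl)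
      then obtain c where xc: "(x, c) \<in> (parent_rel p)\<^sup>*" and pc: "p c = Some r"
        by (auto dest: tranclD2)
      have C: "C = subtree p c"
        using component_eq_child_subtree[OF st assms(2) r(1) pc] xc x(2) by simp
      have "c \<in> S" using search_tree_parent_mem(1)[OF st pc] .
      have "r \<notin> C" using C pc r(1) rtrancl_parent_from_root[of p r c] by auto
      then have "C \<subset> S" using C search_tree_subtree_subset[OF st \<open>c \<in> S\<close>] \<open>r \<in> S\<close> by blast
      moreover have "search_tree E C (restrict_tree p C c)"
        using search_tree_restrict_subtree[OF st \<open>c \<in> S\<close>] C by simp
      ultimately have "stree E C (restrict_tree p C c)" by (rule psubset.IH)
      moreover have "c \<in> C" using C by simp
      ultimately show "\<exists>c\<in>C. p c = Some r \<and> stree E C (\<lambda>x. if x \<in> C \<and> x \<noteq> c then p x else None)"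
        using pc unfolding restrict_tree_def by blast
    qed
  qed fact+
qed

lemma rtrancl_parent_restrict_tree:
  assumes st: "search_tree E C (restrict_tree p C c)" and c: "c \<in> C" "p c = Some r"
    and r: "p r = None" and x: "x \<in> C"
  shows "(x, z) \<in> (parent_rel p)\<^sup>* \<longleftrightarrow> (x, z) \<in> (parent_rel (restrict_tree p C c))\<^sup>* \<or> z = r"
proof
  let ?q = "restrict_tree p C c"
  have "?q c = None" by (simp add: restrict_tree_def)
  then have xc: "(x, c) \<in> (parent_rel ?q)\<^sup>*" using search_tree_root_subtree[OF st _ c(1)] x by auto
  show "(x, z) \<in> (parent_rel ?q)\<^sup>* \<or> z = r" if "(x, z) \<in> (parent_rel p)\<^sup>*"
    using that
  proof (induction rule: rtrancl_induct)
    case (step z z')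
    from step.IH show ?case
    proof
      assume xz: "(x, z) \<in> (parent_rel ?q)\<^sup>*"
      show ?thesis
      proof (cases "z = c")
        case True then show ?thesis using step.hyps(2) c(2) by simp
      next
        case False
        have "z \<in> C" using search_tree_rtrancl_mem[OF st x xz] .
        with False step.hyps(2) have "?q z = Some z'" by (simp add: restrict_tree_def)
        with xz show ?thesis by (simp add: rtrancl_into_rtrancl)
      qed
    qed (use step.hyps(2) r in simp)
  qed simp
  show "(x, z) \<in> (parent_rel p)\<^sup>*" if "(x, z) \<in> (parent_rel ?q)\<^sup>* \<or> z = r"
    using that rtrancl_restrict_tree_imp[OF xc] c(2)
    by (auto intro: rtrancl_restrict_tree_imp rtrancl_into_rtrancl)
qed

lemma restrict_tree_child_unique:
  assumes "search_tree E C (restrict_tree p C c)" "c' \<in> C" "p c' = Some r" "r \<notin> C"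
  shows "c' = c"
proof (rule ccontr)
  assume "c' \<noteq> c"
  with assms(2,3) have "restrict_tree p C c c' = Some r" by (simp add: restrict_tree_def)
  then have "r \<in> C" by (rule search_tree_parent_mem(2)[OF assms(1)])
  with assms(4) show False ..
qed

context
  fixes E :: "'a \<Rightarrow> 'a \<Rightarrow> bool" and S :: "'a set" and p :: "'a \<Rightarrow> 'a option" and r :: 'a
  assumes sym: "symp E" and root: "p r = None" and outside: "\<And>x. x \<notin> S \<Longrightarrow> p x = None"
    and children: "\<forall>C\<in>components E (S - {r}). \<exists>c\<in>C. p c = Some r \<and>
                     search_tree E C (restrict_tree p C c)"
begin

lemma child_tree:
  assumes "x \<in> S - {r}"
  obtains C c where "C \<in> components E (S - {r})" "x \<in> C" "c \<in> C" "p c = Some r"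
    "search_tree E C (restrict_tree p C c)"
proof -
  let ?C = "component E (S - {r}) x"
  have C: "?C \<in> components E (S - {r})" using assms by (auto simp: components_iff)
  with children obtain c where "c \<in> ?C" "p c = Some r" "search_tree E ?C (restrict_tree p ?C c)"
    by blast
  with C mem_component_self[OF assms] show ?thesis by (rule that)
qed

lemma mem_children_subtree:
  assumes "r \<in> S"
  shows "subtree p r = S"
proof
  show "subtree p r \<subseteq> S"
  proof
    fix x assume x: "x \<in> subtree p r"
    show "x \<in> S"
    proof (cases "x = r")
      case False
      with x have "p x \<noteq> None" by (auto elim: converse_rtranclE)
      then show ?thesis by (rule contrapos_np) (rule outside)
    qed (simp add: assms)
  qed
  show "S \<subseteq> subtree p r"
  proof
    fix x assume "x \<in> S"
    show "x \<in> subtree p r"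
    proof (cases "x = r")
      case False
      with \<open>x \<in> S\<close> have "x \<in> S - {r}" by simp
      then obtain C c where "C \<in> components E (S - {r})" "x \<in> C" "c \<in> C" "p c = Some r"
        "search_tree E C (restrict_tree p C c)" by (rule child_tree)
      then show ?thesis using rtrancl_parent_restrict_tree[of E C p c r x r] root by simp
    qed simp
  qed
qed

lemma subtree_eq_child_subtree:
  assumes C: "C \<in> components E (S - {r})" "w \<in> C" and c: "c \<in> C" "p c = Some r"
    and st: "search_tree E C (restrict_tree p C c)"
  shows "subtree p w = subtree (restrict_tree p C c) w"
proof
  have CS: "C \<subseteq> S - {r}" using C(1) by (rule components_subset)
  show "subtree (restrict_tree p C c) w \<subseteq> subtree p w" using rtrancl_restrict_tree_imp by auto
  show "subtree p w \<subseteq> subtree (restrict_tree p C c) w"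
  proof
    fix y assume yw: "y \<in> subtree p w"
    show "y \<in> subtree (restrict_tree p C c) w"
    proof (cases "y = w")
      case False
      with yw have "p y \<noteq> None" by (auto elim: converse_rtranclE)
      then have "y \<in> S" by (rule contrapos_np) (rule outside)
      moreover have "y \<noteq> r" using yw C(2) CS rtrancl_parent_from_root[of p r] root by auto
      ultimately have "y \<in> S - {r}" by simp
      then obtain C' c' where C': "C' \<in> components E (S - {r})" "y \<in> C'" "c' \<in> C'"
        "p c' = Some r" "search_tree E C' (restrict_tree p C' c')" by (rule child_tree)
      then have yw': "(y, w) \<in> (parent_rel (restrict_tree p C' c'))\<^sup>*"
        using rtrancl_parent_restrict_tree[OF C'(5,3,4) root C'(2)] yw C(2) CS by auto
      then have "w \<in> C'" using search_tree_rtrancl_mem[OF C'(5,2)] by blast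
      then have "C' = C"
        using components_eq_component[OF sym] C C'(1) by metis
      moreover from this have "c' = c"
        using restrict_tree_child_unique[OF st] C'(3,4) CS by blast
      ultimately show ?thesis using yw' by simp
    qed simp
  qed
qed

lemma search_tree_from_children:
  assumes "irreflp E" "r \<in> S" "connected_on E S"
  shows "search_tree E S p"
proof (rule search_treeI[OF outside root mem_children_subtree[OF assms(2)]])
  fix x y assume xy: "x \<in> S" "y \<in> S" "E x y"
  show "(x, y) \<in> (parent_rel p)\<^sup>+ \<or> (y, x) \<in> (parent_rel p)\<^sup>+"
  proof (cases "x = r \<or> y = r")
    case True
    moreover have "x \<noteq> y" using xy(3) assms(1) by (auto simp: irreflp_def)
    ultimately show ?thesis
      using xy mem_children_subtree[OF assms(2)] by (auto simp: rtrancl_eq_or_trancl)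
  next
    case False
    with xy have "x \<in> S - {r}" by simp
    then obtain C c where C: "C \<in> components E (S - {r})" "x \<in> C" "c \<in> C" "p c = Some r"
      and st: "search_tree E C (restrict_tree p C c)" by (rule child_tree)
    have "y \<in> component E (S - {r}) x" using False xy by (intro mem_component_edge) auto
    then have "y \<in> C" using components_eq_component[OF sym C(1,2)] by simp
    then have "(x, y) \<in> (parent_rel (restrict_tree p C c))\<^sup>+ \<or>
               (y, x) \<in> (parent_rel (restrict_tree p C c))\<^sup>+"
      using search_tree_edge[OF st C(2)] xy(3) by blast
    moreover have "parent_rel (restrict_tree p C c) \<subseteq> parent_rel p"
      by (rule parent_rel_mono[OF restrict_tree_le])
    ultimately show ?thesis by (meson trancl_mono)
  qed
next
  fix w assume "w \<in> S"
  show "connected_on E (subtree p w)"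
  proof (cases "w = r")
    case False
    with \<open>w \<in> S\<close> have "w \<in> S - {r}" by simp
    then obtain C c where C: "C \<in> components E (S - {r})" "w \<in> C" "c \<in> C" "p c = Some r"
      and st: "search_tree E C (restrict_tree p C c)" by (rule child_tree)
    then show ?thesis
      using search_tree_subtree_connected[OF st C(2)] subtree_eq_child_subtree[OF C st] by simp
  qed (use mem_children_subtree[OF assms(2)] assms(3) in simp)
qed

end

lemma stree_imp_search_tree:
  assumes "stree E S p" "symp E" "irreflp E"
  shows "search_tree E S p"
  using assms(1)
proof induction
  case (1 r S p)
  then show ?case
    using search_tree_from_children[where S = S and p = p and r = r, OF assms(2)] assms(3)
    unfolding restrict_tree_def by blast
qed

lemma stree_iff_search_tree:
  "finite S \<Longrightarrow> symp E \<Longrightarrow> irreflp E \<Longrightarrow> stree E S p \<longleftrightarrow> search_tree E S p"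
  using search_tree_imp_stree stree_imp_search_tree by blast

section \<open>Rotations\<close>

lemma trancl_transfer:
  assumes edge: "\<And>y z. (y, z) \<in> r \<Longrightarrow> (y, z) \<in> s\<^sup>+ \<or> (z = c \<and> (y, d) \<in> s\<^sup>*)"
    and jump: "\<And>z. (c, z) \<in> r \<Longrightarrow> (d, z) \<in> s"
    and "(y, z) \<in> r\<^sup>+"
  shows "(y, z) \<in> s\<^sup>+ \<or> (z = c \<and> (y, d) \<in> s\<^sup>*)"
  using \<open>(y, z) \<in> r\<^sup>+\<close>
proof (induction rule: trancl_induct)
  case (step z z')
  from step.IH show ?case
  proof
    assume yz: "(y, z) \<in> s\<^sup>+"
    from edge[OF step.hyps(2)] show ?thesis
      by (meson yz trancl_trans trancl_into_rtrancl rtrancl_trans)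
  next
    assume "z = c \<and> (y, d) \<in> s\<^sup>*"
    with jump step.hyps(2) have "(y, z') \<in> s\<^sup>+" by (auto intro: rtrancl_into_trancl1)
    then show ?thesis by simp
  qed
qed (rule edge)

lemma rot_at_b [simp]: "rot E p a b b = p a"
  by (simp add: rot_def)

lemma rot_at_a: "a \<noteq> b \<Longrightarrow> rot E p a b a = Some b"
  by (simp add: rot_def)

lemma rot_at_child:
  "x \<noteq> b \<Longrightarrow> x \<noteq> a \<Longrightarrow> p x = Some b \<Longrightarrow>
   rot E p a b x = (if \<exists>y\<in>subtree p x. E a y then Some a else Some b)"
  by (simp add: rot_def in_subtree_iff Bex_def)

lemma rot_at_other: "x \<noteq> b \<Longrightarrow> x \<noteq> a \<Longrightarrow> p x \<noteq> Some b \<Longrightarrow> rot E p a b x = p x"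
  by (simp add: rot_def)

context
  fixes E :: "'a \<Rightarrow> 'a \<Rightarrow> bool" and p :: "'a \<Rightarrow> 'a option" and a b :: 'a
  assumes ab: "a \<noteq> b" and pb: "p b = Some a"
begin

lemma rot_parent_cases:
  assumes "rot E p a b y = Some z"
  shows "(y, z) \<in> (parent_rel p)\<^sup>+ \<or> (z = b \<and> (y, a) \<in> (parent_rel p)\<^sup>*)"
proof -
  consider "y = b" | "y = a" | "y \<noteq> b" "y \<noteq> a" "p y = Some b" | "y \<noteq> b" "y \<noteq> a" "p y \<noteq> Some b"
    by blast
  then show ?thesis
  proof cases
    case 1
    with assms pb have "(b, a) \<in> parent_rel p" "(a, z) \<in> parent_rel p" by auto
    with 1 show ?thesis by (meson r_into_trancl trancl_into_trancl)
  next
    case 2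
    with assms show ?thesis using rot_at_a[OF ab] by simp
  next
    case 3
    with assms have "z = a \<or> z = b" by (auto simp: rot_at_child split: if_splits)
    moreover have "(y, b) \<in> parent_rel p" using 3 by simp
    moreover have "(y, a) \<in> (parent_rel p)\<^sup>+"
      using \<open>(y, b) \<in> parent_rel p\<close> pb by (meson parent_rel_iff r_into_trancl trancl_into_trancl)
    ultimately show ?thesis by auto
  next
    case 4
    with assms show ?thesis by (simp add: rot_at_other r_into_trancl)
  qed
qed

lemma parent_rot_cases:
  assumes "p y = Some z"
  shows "(y, z) \<in> (parent_rel (rot E p a b))\<^sup>+ \<or> (z = a \<and> (y, b) \<in> (parent_rel (rot E p a b))\<^sup>*)"
proof -
  let ?q = "rot E p a b"
  consider "y = b" | "y = a" | "y \<noteq> b" "y \<noteq> a" "p y = Some b" | "y \<noteq> b" "y \<noteq> a" "p y \<noteq> Some b"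
    by blast
  then show ?thesis
  proof cases
    case 1
    with assms pb show ?thesis by simp
  next
    case 2
    with assms have "(a, b) \<in> parent_rel ?q" "(b, z) \<in> parent_rel ?q" using rot_at_a[OF ab] by auto
    with 2 show ?thesis by (meson r_into_trancl trancl_into_trancl)
  next
    case 3
    then have "?q y = Some a \<or> ?q y = Some b" by (auto simp: rot_at_child)
    moreover have "(a, b) \<in> parent_rel ?q" using rot_at_a[OF ab] by simp
    ultimately have "(y, b) \<in> (parent_rel ?q)\<^sup>+"
      by (meson parent_rel_iff r_into_trancl trancl_into_trancl)
    then show ?thesis using 3 assms by simp
  next
    case 4
    with assms show ?thesis by (simp add: rot_at_other r_into_trancl)
  qed
qed

lemma trancl_rot_cases:
  "(y, z) \<in> (parent_rel (rot E p a b))\<^sup>+ \<Longrightarrow>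
   (y, z) \<in> (parent_rel p)\<^sup>+ \<or> (z = b \<and> (y, a) \<in> (parent_rel p)\<^sup>*)"
  by (rule trancl_transfer[OF _ _ , of _ _ b a]) (auto simp: rot_parent_cases)

lemma trancl_parent_rot_cases:
  "(y, z) \<in> (parent_rel p)\<^sup>+ \<Longrightarrow>
   (y, z) \<in> (parent_rel (rot E p a b))\<^sup>+ \<or> (z = a \<and> (y, b) \<in> (parent_rel (rot E p a b))\<^sup>*)"
  by (rule trancl_transfer[OF _ _ , of _ _ a b]) (auto simp: parent_rot_cases)

lemma subtree_rot_other:
  assumes "w \<noteq> a" "w \<noteq> b"
  shows "subtree (rot E p a b) w = subtree p w"
  using assms trancl_rot_cases[of _ w] trancl_parent_rot_cases[of _ w]
  by (auto simp: rtrancl_eq_or_trancl)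

lemma subtree_rot_b: "subtree (rot E p a b) b = subtree p a"
proof (intro set_eqI iffI; simp only: mem_subtree_iff)
  let ?q = "rot E p a b"
  have ba: "(b, a) \<in> parent_rel p" and ab': "(a, b) \<in> parent_rel ?q"
    using pb rot_at_a[OF ab] by simp_all
  fix y
  show "(y, a) \<in> (parent_rel p)\<^sup>*" if "(y, b) \<in> (parent_rel ?q)\<^sup>*"
  proof (cases "y = b")
    case False
    then have "(y, b) \<in> (parent_rel p)\<^sup>+ \<or> (y, a) \<in> (parent_rel p)\<^sup>*"
      using that trancl_rot_cases[of y b] by (auto simp: rtrancl_eq_or_trancl)
    then show ?thesis using ba by (meson trancl_into_rtrancl rtrancl_into_rtrancl)
  qed (use ba in auto)
  show "(y, b) \<in> (parent_rel ?q)\<^sup>*" if "(y, a) \<in> (parent_rel p)\<^sup>*"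
  proof (cases "y = a")
    case False
    then have "(y, a) \<in> (parent_rel ?q)\<^sup>+ \<or> (y, b) \<in> (parent_rel ?q)\<^sup>*"
      using that trancl_parent_rot_cases[of y a] by (auto simp: rtrancl_eq_or_trancl)
    then show ?thesis using ab' by (meson trancl_into_rtrancl rtrancl_into_rtrancl)
  qed (use ab' in auto)
qed

end

lemma connected_on_subtreeI:
  assumes "symp E"
    and "\<And>c. p c = Some w \<Longrightarrow> connected_on E (subtree p c)"
    and "\<And>c. p c = Some w \<Longrightarrow> \<exists>s\<in>subtree p c. E w s"
  shows "connected_on E (subtree p w)"
proof (rule connected_onI[OF assms(1), of w])
  fix y assume y: "y \<in> subtree p w"
  show "reach_in E (subtree p w) y w"
  proof (cases "y = w")
    case False
    with y have "(y, w) \<in> (parent_rel p)\<^sup>+" by (simp add: rtrancl_eq_or_trancl)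
    then obtain c where yc: "(y, c) \<in> (parent_rel p)\<^sup>*" and pc: "p c = Some w"
      by (auto dest: tranclD2)
    obtain s where s: "s \<in> subtree p c" "E w s" using assms(3)[OF pc] by blast
    have sub: "subtree p c \<subseteq> subtree p w"
      using pc rtrancl_into_rtrancl[of _ c "parent_rel p" w] by auto
    have "reach_in E (subtree p c) y s" using assms(2)[OF pc] yc s(1) by (simp add: connected_onD)
    then have "reach_in E (subtree p w) y s" using sub by (rule reach_in_mono)
    moreover have "reach_in E (subtree p w) s w"
    proof (rule reach_in_edge)
      show "s \<in> subtree p w" using s(1) sub by blast
      show "E s w" using s(2) assms(1) by (rule sympD[rotated])
    qed simp
    ultimately show ?thesis by (rule reach_in_trans)
  qed (simp add: reach_in_refl)
qed simp

context
  fixes E :: "'a \<Rightarrow> 'a \<Rightarrow> bool" and p :: "'a \<Rightarrow> 'a option" and a b :: 'a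
  assumes acyclic: "acyclic (parent_rel p)" and pb: "p b = Some a"
begin

lemma rot_distinct: "a \<noteq> b"
  using acyclic_parent_rel_no_loop[OF acyclic, of b] pb by auto

lemma parent_a_not_b: "p a \<noteq> Some b"
proof
  assume "p a = Some b"
  with pb have "(a, a) \<in> (parent_rel p)\<^sup>+" by (meson parent_rel_iff r_into_trancl trancl_into_trancl)
  with acyclic show False by (simp add: acyclic_def)
qed

lemma trancl_rot_neighbour:
  assumes xa: "(x, a) \<in> (parent_rel p)\<^sup>+" and "E a x" and "x \<noteq> b"
  shows "(x, a) \<in> (parent_rel (rot E p a b))\<^sup>+"
proof -
  note no_loop = acyclic_parent_rel_no_loop[OF acyclic]
  obtain c where xc: "(x, c) \<in> (parent_rel p)\<^sup>*" and pc: "p c = Some a"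
    using tranclD2[OF xa] by auto
  have ca: "c \<noteq> a" using pc no_loop by auto
  show ?thesis
  proof (cases "c = b")
    case False
    have "rot E p a b c = Some a" using rot_at_other[where p = p, OF False ca] pc rot_distinct by simp
    moreover have "(x, c) \<in> (parent_rel (rot E p a b))\<^sup>*"
      using subtree_rot_other[where p = p, OF rot_distinct pb ca False] xc by (simp add: set_eq_iff)
    ultimately show ?thesis by (auto intro: rtrancl_into_trancl1)
  next
    case True
    then have "(x, b) \<in> (parent_rel p)\<^sup>+" using xc \<open>x \<noteq> b\<close> by (simp add: rtrancl_eq_or_trancl)
    then obtain m where xm: "(x, m) \<in> (parent_rel p)\<^sup>*" and pm: "p m = Some b"
      by (auto dest: tranclD2)
    have mb: "m \<noteq> b" using pm no_loop by auto
    have ma: "m \<noteq> a" using pm parent_a_not_b by auto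
    have "rot E p a b m = Some a" using rot_at_child[where p = p, OF mb ma pm] xm \<open>E a x\<close> by auto
    moreover have "(x, m) \<in> (parent_rel (rot E p a b))\<^sup>*"
      using subtree_rot_other[where p = p, OF rot_distinct pb ma mb] xm by (simp add: set_eq_iff)
    ultimately show ?thesis by (auto intro: rtrancl_into_trancl1)
  qed
qed

lemma rot_edge_comparable:
  assumes "symp E" and "E x y" and "(x, y) \<in> (parent_rel p)\<^sup>+ \<or> (y, x) \<in> (parent_rel p)\<^sup>+"
  shows "(x, y) \<in> (parent_rel (rot E p a b))\<^sup>+ \<or> (y, x) \<in> (parent_rel (rot E p a b))\<^sup>+"
proof -
  let ?q = "rot E p a b"
  have one_way: "(x, y) \<in> (parent_rel ?q)\<^sup>+ \<or> (y, x) \<in> (parent_rel ?q)\<^sup>+"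
    if xy: "(x, y) \<in> (parent_rel p)\<^sup>+" and "E x y" for x y
  proof (cases "(x, y) \<in> (parent_rel ?q)\<^sup>+")
    case False
    then have y: "y = a" using trancl_parent_rot_cases[where p = p, OF rot_distinct pb xy] by blast
    show ?thesis
    proof (cases "x = b")
      case True
      then show ?thesis using y rot_at_a[OF rot_distinct] by auto
    next
      case False
      have "E a x" using \<open>E x y\<close> y \<open>symp E\<close> by (auto dest: sympD)
      then show ?thesis using trancl_rot_neighbour xy y False by blast
    qed
  qed simp
  from assms(3) show ?thesis
  proof
    assume "(y, x) \<in> (parent_rel p)\<^sup>+"
    moreover have "E y x" using assms(1,2) by (auto dest: sympD)
    ultimately show ?thesis using one_way by blast
  qed (use one_way assms(2) in blast)
qed

end

lemma rot_subtree_a_connected: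
  assumes st: "search_tree E S p" and "symp E" and pb: "p b = Some a"
    and outside: "\<And>x. x \<notin> S \<Longrightarrow> rot E p a b x = None"
  shows "connected_on E (subtree (rot E p a b) a)"
proof (rule connected_on_subtreeI[OF \<open>symp E\<close>])
  let ?q = "rot E p a b"
  have acyclic: "acyclic (parent_rel p)" by (rule search_tree_acyclic[OF st])
  note ab = rot_distinct[OF acyclic pb]
  fix c assume qc: "?q c = Some a"
  have "c \<noteq> a" using qc rot_at_a[OF ab] ab by auto
  moreover have "c \<noteq> b" using qc acyclic_parent_rel_no_loop[OF acyclic, of a] by auto
  ultimately have sub: "subtree ?q c = subtree p c" by (rule subtree_rot_other[where p = p, OF ab pb])
  have "c \<in> S" using qc outside by (metis option.distinct(1))
  then show "connected_on E (subtree ?q c)" using sub search_tree_subtree_connected[OF st] by simp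
  show "\<exists>s\<in>subtree ?q c. E a s"
  proof (cases "p c = Some b")
    case True
    with \<open>c \<noteq> a\<close> \<open>c \<noteq> b\<close> qc show ?thesis
      using sub ab by (auto simp: rot_at_child split: if_splits)
  next
    case False
    with \<open>c \<noteq> a\<close> \<open>c \<noteq> b\<close> qc have "p c = Some a" by (simp add: rot_at_other)
    then show ?thesis
      using exists_neighbour_in_child_subtree[OF st \<open>symp E\<close>] sub by blast
  qed
qed

lemma rot_root:
  assumes st: "search_tree E S p" and pb: "p b = Some a"
  obtains r where "rot E p a b r = None" "subtree (rot E p a b) r = S"
proof (cases "p a")
  case None
  note ab = rot_distinct[OF search_tree_acyclic[OF st] pb]
  have "a \<in> S" using search_tree_parent_mem(2)[OF st pb] .
  then show ?thesis
    using that[of b] subtree_rot_b[where p = p, OF ab pb] search_tree_root_subtree[OF st None] None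
    by simp
next
  case (Some z)
  note ab = rot_distinct[OF search_tree_acyclic[OF st] pb]
  obtain r where r: "p r = None" "subtree p r = S" by (rule search_tree_root[OF st])
  with Some pb have "r \<noteq> a" "r \<noteq> b" by auto
  then show ?thesis
    using that[of r] r subtree_rot_other[where p = p, OF ab pb] rot_at_other[of r b a p E] by simp
qed

lemma search_tree_rot:
  assumes st: "search_tree E S p" and "symp E" and pb: "p b = Some a"
  shows "search_tree E S (rot E p a b)"
proof -
  let ?q = "rot E p a b"
  have acyclic: "acyclic (parent_rel p)" by (rule search_tree_acyclic[OF st])
  note ab = rot_distinct[OF acyclic pb]
  have S: "a \<in> S" "b \<in> S" using search_tree_parent_mem[OF st pb] by simp_all
  have outside: "?q x = None" if "x \<notin> S" for x
  proof -
    have "x \<noteq> a" "x \<noteq> b" using that S by auto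
    then show ?thesis using search_tree_outside[OF st that] by (simp add: rot_at_other)
  qed
  obtain r where root: "?q r = None" "subtree ?q r = S" by (rule rot_root[OF st pb])
  show ?thesis
  proof (rule search_treeI[OF outside root])
    fix x y assume "x \<in> S" "y \<in> S" "E x y"
    then show "(x, y) \<in> (parent_rel ?q)\<^sup>+ \<or> (y, x) \<in> (parent_rel ?q)\<^sup>+"
      using rot_edge_comparable[OF acyclic pb \<open>symp E\<close>] search_tree_edge[OF st] by blast
  next
    fix w assume "w \<in> S"
    consider "w = a" | "w = b" | "w \<noteq> a" "w \<noteq> b" by blast
    then show "connected_on E (subtree ?q w)"
    proof cases
      case 1
      then show ?thesis using rot_subtree_a_connected[OF st \<open>symp E\<close> pb outside] by simp
    next
      case 2
      then show ?thesis
        using subtree_rot_b[where p = p, OF ab pb] search_tree_subtree_connected[OF st S(1)] by simp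
    next
      case 3
      then show ?thesis
        using subtree_rot_other[where p = p, OF ab pb] search_tree_subtree_connected[OF st \<open>w \<in> S\<close>] by simp
    qed
  qed
qed

section \<open>Rotations and relative order\<close>

lemma rot_reversed_pair:
  assumes "acyclic (parent_rel p)" "acyclic (parent_rel (rot E p a b))" "p b = Some a"
    and "(x, y) \<in> (parent_rel p)\<^sup>+" "(y, x) \<in> (parent_rel (rot E p a b))\<^sup>+"
  shows "x = b \<and> y = a"
proof -
  note ab = rot_distinct[OF assms(1,3)]
  have "x = b"
    using trancl_rot_cases[where p = p, OF ab assms(3,5)] acyclic_trancl_asym[OF assms(1,4)] by blast
  moreover have "y = a"
    using trancl_parent_rot_cases[where p = p, OF ab assms(3,4)] acyclic_trancl_asym[OF assms(2,5)]
    by blast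
  ultimately show ?thesis ..
qed

lemma rot_changes_order_iff:
  assumes st: "search_tree E S p" and "symp E" and pb: "p b = Some a"
    and "u \<in> S" "v \<in> S" "E u v"
  shows "anc p u v \<noteq> anc (rot E p a b) u v \<longleftrightarrow> is_pair u v (a, b)"
proof -
  let ?q = "rot E p a b"
  have st': "search_tree E S ?q" by (rule search_tree_rot[OF st \<open>symp E\<close> pb])
  note acyclic = search_tree_acyclic[OF st] search_tree_acyclic[OF st']
  note asym = acyclic_trancl_asym[OF acyclic(1)] acyclic_trancl_asym[OF acyclic(2)]
  have ba: "(b, a) \<in> (parent_rel p)\<^sup>+" and ab: "(a, b) \<in> (parent_rel ?q)\<^sup>+"
    using pb rot_at_a[OF rot_distinct[OF acyclic(1) pb]] by auto
  have "(u, v) \<in> (parent_rel p)\<^sup>+ \<or> (v, u) \<in> (parent_rel p)\<^sup>+"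
    and "(u, v) \<in> (parent_rel ?q)\<^sup>+ \<or> (v, u) \<in> (parent_rel ?q)\<^sup>+"
    using search_tree_edge[OF st] search_tree_edge[OF st'] assms(4-6) by blast+
  then show ?thesis
    unfolding anc_iff_trancl is_pair_def
    using rot_reversed_pair[OF acyclic pb, of u v] rot_reversed_pair[OF acyclic pb, of v u]
      ba ab asym by blast
qed

lemma rot_seq_parity:
  assumes "finite V" "symp E" "irreflp E" "u \<in> V" "v \<in> V" "E u v"
  shows "rot_seq V E p ps q \<Longrightarrow> anc p u v \<noteq> anc q u v \<longleftrightarrow> odd (length (filter (is_pair u v) ps))"
proof (induction ps arbitrary: p)
  case (Cons ab ps)
  obtain a b where [simp]: "ab = (a, b)" by fastforce
  from Cons.prems have st: "search_tree E V p" and pb: "p b = Some a"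
    and rs: "rot_seq V E (rot E p a b) ps q"
    using stree_iff_search_tree[OF assms(1-3)] by auto
  have "anc p u v \<noteq> anc (rot E p a b) u v \<longleftrightarrow> is_pair u v (a, b)"
    by (rule rot_changes_order_iff[OF st assms(2) pb assms(4-6)])
  with Cons.IH[OF rs] show ?case by auto
qed simp

lemma R_edge_changes_order_iff:
  assumes "finite V" "symp E" "irreflp E" "u \<in> V" "v \<in> V" "E u v" and "R_edge V E x y"
  shows "anc x u v \<noteq> anc y u v \<longleftrightarrow> uv_edge E u v x y"
proof -
  have st: "search_tree E V x" "search_tree E V y"
    using assms(7) stree_iff_search_tree[OF assms(1-3)] unfolding R_edge_def by auto
  have flip: "anc p u v \<noteq> anc q u v \<longleftrightarrow> is_pair u v (a', b')"
    if "is_rotation E p a' b' q" "search_tree E V p" for p q a' b'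
    using rot_changes_order_iff[OF that(2) assms(2) _ assms(4-6)] that(1)
    unfolding is_rotation_def by blast
  obtain a' b' where "is_rotation E x a' b' y \<or> is_rotation E y a' b' x"
    using assms(7) unfolding R_edge_def by blast
  then have "anc x u v \<noteq> anc y u v \<longleftrightarrow> is_pair u v (a', b')"
    using flip st by metis
  then show ?thesis
    unfolding uv_edge_def using \<open>is_rotation E x a' b' y \<or> _\<close> flip st by metis
qed

lemma num_uv_edges_Nil [simp]: "num_uv_edges E u v [] = 0"
  by (simp add: num_uv_edges_def)

lemma num_uv_edges_singleton [simp]: "num_uv_edges E u v [x] = 0"
  by (simp add: num_uv_edges_def)

lemma num_uv_edges_Cons_Cons:
  "num_uv_edges E u v (x # y # zs) =
     (if uv_edge E u v x y then 1 else 0) + num_uv_edges E u v (y # zs)"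
proof -
  let ?P = "uv_edge E u v"
  define A where "A = {i. Suc i < length (y # zs) \<and> ?P ((y # zs) ! i) ((y # zs) ! Suc i)}"
  have "{i. Suc i < length (x # y # zs) \<and> ?P ((x # y # zs) ! i) ((x # y # zs) ! Suc i)}
      = {i. i = 0 \<and> ?P x y} \<union> Suc ` A" (is "?L = ?R")
  proof (intro set_eqI iffI)
    fix i assume "i \<in> ?L"
    then show "i \<in> ?R" unfolding A_def by (cases i) auto
  qed (auto simp: A_def)
  moreover have "finite A" unfolding A_def by (rule finite_subset[of _ "{..<length (y # zs)}"]) auto
  ultimately show ?thesis
    unfolding num_uv_edges_def A_def[symmetric] by (simp add: card_Un_disjoint card_image)
qed

lemma R_path_parity:
  assumes "finite V" "symp E" "irreflp E" "u \<in> V" "v \<in> V" "E u v"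
  shows "successively (R_edge V E) xs \<Longrightarrow> xs \<noteq> [] \<Longrightarrow>
    anc (hd xs) u v \<noteq> anc (last xs) u v \<longleftrightarrow> odd (num_uv_edges E u v xs)"
proof (induction xs rule: induct_list012)
  case (3 x y zs)
  then have "R_edge V E x y" by simp
  with 3 show ?case
    using R_edge_changes_order_iff[OF assms] by (auto simp: num_uv_edges_Cons_Cons)
qed simp_all

section \<open>The rotation graph is connected\<close>

definition settled :: "('a \<Rightarrow> 'a option) \<Rightarrow> ('a \<Rightarrow> 'a option) \<Rightarrow> 'a \<Rightarrow> bool" where
  "settled T T' y \<longleftrightarrow> (\<forall>z. (y, z) \<in> (parent_rel T')\<^sup>* \<longrightarrow> T z = T' z)"

lemma settled_rtrancl_iff:
  assumes "settled T T' y"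
  shows "(y, z) \<in> (parent_rel T)\<^sup>* \<longleftrightarrow> (y, z) \<in> (parent_rel T')\<^sup>*"
proof
  show "(y, z) \<in> (parent_rel T')\<^sup>*" if "(y, z) \<in> (parent_rel T)\<^sup>*"
    using that
  proof (induction rule: rtrancl_induct)
    case (step z z')
    with assms have "T' z = Some z'" by (auto simp: settled_def)
    with step.IH show ?case by (simp add: rtrancl_into_rtrancl)
  qed simp
  show "(y, z) \<in> (parent_rel T)\<^sup>*" if "(y, z) \<in> (parent_rel T')\<^sup>*"
    using that
  proof (induction rule: rtrancl_induct)
    case (step z z')
    with assms have "T z = Some z'" by (auto simp: settled_def)
    with step.IH show ?case by (simp add: rtrancl_into_rtrancl)
  qed simp
qed

lemma settled_ancestor: "settled T T' y \<Longrightarrow> (y, z) \<in> (parent_rel T')\<^sup>* \<Longrightarrow> settled T T' z"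
  unfolding settled_def by (meson rtrancl_trans)

lemma settled_Some:
  assumes "T' x = Some w"
  shows "settled T T' x \<longleftrightarrow> T x = T' x \<and> settled T T' w"
proof
  assume sx: "settled T T' x"
  have "(x, w) \<in> (parent_rel T')\<^sup>*" using assms by auto
  then have "settled T T' w" using sx by (rule settled_ancestor[rotated])
  with sx show "T x = T' x \<and> settled T T' w" by (simp add: settled_def)
next
  assume "T x = T' x \<and> settled T T' w"
  with assms show "settled T T' x" unfolding settled_def by (auto elim: converse_rtranclE)
qed

lemma settled_None: "T' x = None \<Longrightarrow> settled T T' x \<longleftrightarrow> T x = None"
  unfolding settled_def by (auto elim: converse_rtranclE)

lemma settled_subtree_eq:
  assumes st: "search_tree E V T" and st': "search_tree E V T'"
    and "a \<in> V" and "settled T T' a"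
  shows "subtree T a = subtree T' a"
proof -
  have "(a, z) \<in> (parent_rel T)\<^sup>+ \<longleftrightarrow> (a, z) \<in> (parent_rel T')\<^sup>+" for z
    using settled_rtrancl_iff[OF assms(4)] search_tree_not_trancl_self[OF st]
      search_tree_not_trancl_self[OF st'] by (metis rtrancl_eq_or_trancl)
  then show ?thesis using subtree_eq_component[OF st \<open>a \<in> V\<close>] subtree_eq_component[OF st' \<open>a \<in> V\<close>]
    by simp
qed

lemma exists_lowest_unsettled:
  assumes "finite V" and st': "search_tree E V T'" and "y \<in> V" "\<not> settled T T' y"
  obtains x where "x \<in> V" "\<not> settled T T' x" "\<forall>z. (x, z) \<in> (parent_rel T')\<^sup>+ \<longrightarrow> settled T T' z"
proof -
  define Z where "Z = {z. (y, z) \<in> (parent_rel T')\<^sup>* \<and> T z \<noteq> T' z}"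
  have "parent_rel T' \<subseteq> V \<times> V" using search_tree_parent_mem[OF st'] by auto
  then have "finite (parent_rel T')" using assms(1) finite_subset by blast
  then have "wf (((parent_rel T')\<^sup>+)\<inverse>)"
    using finite_acyclic_wf_converse[OF _ search_tree_acyclic[OF st']]
    by (simp add: trancl_converse[symmetric] wf_trancl)
  moreover obtain z0 where "z0 \<in> Z" using assms(4) unfolding Z_def settled_def by blast
  ultimately obtain x where x: "x \<in> Z" and min: "\<And>z. (x, z) \<in> (parent_rel T')\<^sup>+ \<Longrightarrow> z \<notin> Z"
    by (auto elim: wfE_min)
  show ?thesis
  proof (rule that)
    show "x \<in> V" using x search_tree_rtrancl_mem[OF st' \<open>y \<in> V\<close>] unfolding Z_def by blast
    show "\<not> settled T T' x" using x unfolding Z_def settled_def by blast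
    show "\<forall>z. (x, z) \<in> (parent_rel T')\<^sup>+ \<longrightarrow> settled T T' z"
      unfolding settled_def
    proof (intro allI impI)
      fix z z' assume "(x, z) \<in> (parent_rel T')\<^sup>+" "(z, z') \<in> (parent_rel T')\<^sup>*"
      then have "(x, z') \<in> (parent_rel T')\<^sup>+" by (rule trancl_rtrancl_trancl)
      moreover from this have "(y, z') \<in> (parent_rel T')\<^sup>*"
        using x unfolding Z_def by (auto dest: trancl_into_rtrancl intro: rtrancl_trans)
      ultimately show "T z' = T' z'" using min unfolding Z_def by blast
    qed
  qed
qed

context
  fixes E :: "'a \<Rightarrow> 'a \<Rightarrow> bool" and V :: "'a set" and T T' :: "'a \<Rightarrow> 'a option" and x a :: 'a
  assumes sym: "symp E" and st: "search_tree E V T" and st': "search_tree E V T'"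
    and above: "\<forall>z. (x, z) \<in> (parent_rel T')\<^sup>+ \<longrightarrow> settled T T' z"
    and target: "\<forall>w. T' x = Some w \<longrightarrow> (x, w) \<in> (parent_rel T)\<^sup>+"
    and Ta: "T x = Some a" and moves: "T x \<noteq> T' x"
begin

lemma parent_not_settled: "\<not> settled T T' a"
proof
  assume sa: "settled T T' a"
  have aV: "a \<in> V" using search_tree_parent_mem(2)[OF st Ta] .
  show False
  proof (cases "T' x")
    case None
    have "(a, x) \<in> (parent_rel T')\<^sup>*"
      using search_tree_root_subtree[OF st' None search_tree_parent_mem(1)[OF st Ta]] aV by auto
    then have "T x = T' x" using sa by (simp add: settled_def)
    with moves show False ..
  next
    case (Some w)
    have "(x, w) \<in> (parent_rel T)\<^sup>+" using target Some by simp
    moreover have "a \<noteq> w" using moves Some Ta by simp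
    ultimately have aw: "(a, w) \<in> (parent_rel T)\<^sup>+"
      using Ta trancl_parent_step[of T x a w] by (simp add: rtrancl_eq_or_trancl)
    have "x \<in> subtree T a" using Ta by auto
    then have "x \<in> subtree T' a" unfolding settled_subtree_eq[OF st st' aV sa] .
    moreover have "x \<noteq> a" using Ta acyclic_parent_rel_no_loop[OF search_tree_acyclic[OF st]] by auto
    ultimately have "(x, a) \<in> (parent_rel T')\<^sup>+" by (simp add: rtrancl_eq_or_trancl)
    then have "(w, a) \<in> (parent_rel T')\<^sup>*" using Some trancl_parent_step[of T' x w a] by simp
    moreover have "settled T T' w" using above r_into_trancl[of x w "parent_rel T'"] Some by simp
    ultimately have "(w, a) \<in> (parent_rel T)\<^sup>*" by (simp add: settled_rtrancl_iff)
    with aw have "(a, a) \<in> (parent_rel T)\<^sup>+" by (rule trancl_rtrancl_trancl)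
    then show False using search_tree_not_trancl_self[OF st] by blast
  qed
qed

lemma settled_rot:
  assumes "settled T T' y"
  shows "settled (rot E T a x) T' y"
  unfolding settled_def
proof (intro allI impI)
  fix z assume "(y, z) \<in> (parent_rel T')\<^sup>*"
  with assms have sz: "settled T T' z" by (rule settled_ancestor)
  have "z \<noteq> x" using sz moves by (auto simp: settled_def)
  moreover have "z \<noteq> a" using sz parent_not_settled by blast
  moreover have "T z \<noteq> Some x"
  proof
    assume "T z = Some x"
    with sz have "(z, x) \<in> (parent_rel T')\<^sup>*" by (auto simp: settled_def)
    with sz have "settled T T' x" by (rule settled_ancestor)
    with moves show False by (simp add: settled_def)
  qed
  ultimately show "rot E T a x z = T' z" using sz by (simp add: rot_at_other settled_def)
qed

lemma ancestors_rot_subset: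
  "{z. (x, z) \<in> (parent_rel (rot E T a x))\<^sup>+} \<subset> {z. (x, z) \<in> (parent_rel T)\<^sup>+}"
proof
  have acyclic: "acyclic (parent_rel T)" by (rule search_tree_acyclic[OF st])
  note ax = rot_distinct[OF acyclic Ta]
  note acyclic' = search_tree_acyclic[OF search_tree_rot[OF st sym Ta]]
  show "{z. (x, z) \<in> (parent_rel (rot E T a x))\<^sup>+} \<subseteq> {z. (x, z) \<in> (parent_rel T)\<^sup>+}"
    using trancl_rot_cases[where p = T, OF ax Ta, of x] acyclic' by (auto simp: acyclic_def)
  have "(x, a) \<in> (parent_rel T)\<^sup>+" using Ta by auto
  moreover have "(x, a) \<notin> (parent_rel (rot E T a x))\<^sup>+"
    using acyclic_trancl_asym[OF acyclic'] rot_at_a[OF ax] by (metis parent_rel_iff r_into_trancl')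
  ultimately show "{z. (x, z) \<in> (parent_rel (rot E T a x))\<^sup>+} \<noteq> {z. (x, z) \<in> (parent_rel T)\<^sup>+}"
    by blast
qed

lemma target_parent_rot: "\<forall>w. T' x = Some w \<longrightarrow> (x, w) \<in> (parent_rel (rot E T a x))\<^sup>+"
proof (intro allI impI)
  fix w assume "T' x = Some w"
  then have "(x, w) \<in> (parent_rel T)\<^sup>+" "w \<noteq> a" using target moves Ta by auto
  then show "(x, w) \<in> (parent_rel (rot E T a x))\<^sup>+"
    using trancl_parent_rot_cases[where p = T, OF rot_distinct[OF search_tree_acyclic[OF st] Ta] Ta]
    by blast
qed

end

lemma rot_seq_to_target_parent:
  assumes "finite V" "symp E" "irreflp E" and st': "search_tree E V T'"
  shows "search_tree E V T \<Longrightarrow> \<forall>z. (x, z) \<in> (parent_rel T')\<^sup>+ \<longrightarrow> settled T T' z \<Longrightarrow>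
    \<forall>w. T' x = Some w \<longrightarrow> (x, w) \<in> (parent_rel T)\<^sup>+ \<Longrightarrow>
    \<exists>ps T2. rot_seq V E T ps T2 \<and> T2 x = T' x \<and> (\<forall>y. settled T T' y \<longrightarrow> settled T2 T' y)"
proof (induction "card {z. (x, z) \<in> (parent_rel T)\<^sup>+}" arbitrary: T rule: less_induct)
  case less
  note st = less.prems(1) and above = less.prems(2) and target = less.prems(3)
  have stree: "stree E V T" using st stree_iff_search_tree[OF assms(1-3)] by simp
  show ?case
  proof (cases "T x = T' x")
    case True
    then show ?thesis using stree by (intro exI[of _ "[]"]) auto
  next
    case moves: False
    obtain a where Ta: "T x = Some a"
      using moves target by (cases "T x"; cases "T' x") (auto elim: converse_tranclE)
    let ?q = "rot E T a x"
    have st_q: "search_tree E V ?q" by (rule search_tree_rot[OF st assms(2) Ta])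
    note step = ancestors_rot_subset settled_rot target_parent_rot
    note step = step[OF assms(2) st st' above target Ta moves]
    have "finite {z. (x, z) \<in> (parent_rel T)\<^sup>+}"
      using search_tree_trancl_mem(2)[OF st] assms(1) by (auto intro: finite_subset)
    then have "card {z. (x, z) \<in> (parent_rel ?q)\<^sup>+} < card {z. (x, z) \<in> (parent_rel T)\<^sup>+}"
      using step(1) by (rule psubset_card_mono)
    moreover have "\<forall>z. (x, z) \<in> (parent_rel T')\<^sup>+ \<longrightarrow> settled ?q T' z" using above step(2) by blast
    ultimately obtain ps T2 where
      "rot_seq V E ?q ps T2" "T2 x = T' x" "\<forall>y. settled ?q T' y \<longrightarrow> settled T2 T' y"
      using less.hyps st_q step(3) by blast
    moreover have "rot_seq V E T ((a, x) # ps) T2" using calculation(1) stree Ta by simp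
    ultimately show ?thesis using step(2) by blast
  qed
qed

lemma rot_seq_append:
  "rot_seq V E p xs m \<Longrightarrow> rot_seq V E m ys q \<Longrightarrow> rot_seq V E p (xs @ ys) q"
  by (induction xs arbitrary: p) auto

lemma rot_seq_last: "rot_seq V E p ps q \<Longrightarrow> stree E V q"
  by (induction ps arbitrary: p) auto

lemma rot_seq_settles_more:
  assumes "finite V" "symp E" "irreflp E" and st: "search_tree E V T" and st': "search_tree E V T'"
    and x: "x \<in> V" "\<not> settled T T' x"
    and above: "\<forall>z. (x, z) \<in> (parent_rel T')\<^sup>+ \<longrightarrow> settled T T' z"
  obtains ps T2 where "rot_seq V E T ps T2" "{y \<in> V. settled T T' y} \<subset> {y \<in> V. settled T2 T' y}"
proof -
  have target: "\<forall>w. T' x = Some w \<longrightarrow> (x, w) \<in> (parent_rel T)\<^sup>+"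
  proof (intro allI impI)
    fix w assume Some: "T' x = Some w"
    then have "settled T T' w" "w \<in> V"
      using above r_into_trancl[of x w "parent_rel T'"] search_tree_parent_mem(2)[OF st' Some]
      by simp_all
    moreover have "x \<in> subtree T' w" using Some by auto
    ultimately have "x \<in> subtree T w" using settled_subtree_eq[OF st st'] by blast
    moreover have "x \<noteq> w" using Some acyclic_parent_rel_no_loop[OF search_tree_acyclic[OF st']] by auto
    ultimately show "(x, w) \<in> (parent_rel T)\<^sup>+" by (simp add: rtrancl_eq_or_trancl)
  qed
  obtain ps T2 where T2: "rot_seq V E T ps T2" "T2 x = T' x"
    "\<forall>y. settled T T' y \<longrightarrow> settled T2 T' y"
    using rot_seq_to_target_parent[OF assms(1-3) st' st above target] by blast
  have "settled T2 T' x"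
  proof (cases "T' x")
    case (Some w)
    then have "settled T T' w" using above r_into_trancl[of x w "parent_rel T'"] by simp
    then show ?thesis using settled_Some[of T' x w T2] Some T2 by simp
  qed (use settled_None[of T' x T2] T2(2) in simp)
  then have "{y \<in> V. settled T T' y} \<subset> {y \<in> V. settled T2 T' y}" using T2(3) x by blast
  with T2(1) show ?thesis by (rule that)
qed

lemma rot_seq_exists:
  assumes "finite V" "symp E" "irreflp E" and st': "search_tree E V T'"
  shows "search_tree E V T \<Longrightarrow> \<exists>ps. rot_seq V E T ps T'"
proof (induction "card V - card {y \<in> V. settled T T' y}" arbitrary: T rule: less_induct)
  case less
  note st = less.prems
  show ?case
  proof (cases "\<forall>y\<in>V. settled T T' y")
    case True
    have "T = T'"
    proof
      fix y show "T y = T' y"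
        using True search_tree_outside[OF st, of y] search_tree_outside[OF st', of y]
        by (cases "y \<in> V") (auto simp: settled_def)
    qed
    then show ?thesis using st stree_iff_search_tree[OF assms(1-3)] by (intro exI[of _ "[]"]) simp
  next
    case False
    then obtain y where "y \<in> V" "\<not> settled T T' y" by blast
    then obtain x where "x \<in> V" "\<not> settled T T' x"
      and "\<forall>z. (x, z) \<in> (parent_rel T')\<^sup>+ \<longrightarrow> settled T T' z"
      using exists_lowest_unsettled[OF assms(1) st'] by blast
    then obtain ps T2 where T2: "rot_seq V E T ps T2"
      and more: "{y \<in> V. settled T T' y} \<subset> {y \<in> V. settled T2 T' y}"
      using rot_seq_settles_more[OF assms(1-3) st st'] by blast
    have st2: "search_tree E V T2"
      using rot_seq_last[OF T2] stree_iff_search_tree[OF assms(1-3)] by simp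
    have "card {y \<in> V. settled T T' y} < card {y \<in> V. settled T2 T' y}"
      using more assms(1) by (simp add: psubset_card_mono)
    moreover have "card {y \<in> V. settled T2 T' y} \<le> card V" using assms(1) by (simp add: card_mono)
    ultimately obtain ps2 where "rot_seq V E T2 ps2 T'" using less.hyps[OF _ st2] by fastforce
    then show ?thesis using rot_seq_append[OF T2] by blast
  qed
qed

section \<open>True twins\<close>

definition conj_tree :: "('a \<Rightarrow> 'a) \<Rightarrow> ('a \<Rightarrow> 'a option) \<Rightarrow> 'a \<Rightarrow> 'a option" where
  "conj_tree s p = map_option s \<circ> p \<circ> s"

context
  fixes s :: "'a \<Rightarrow> 'a"
  assumes inv: "\<And>x. s (s x) = x"
begin

lemma conj_tree_conj_tree [simp]: "conj_tree s (conj_tree s p) = p"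
  by (simp add: conj_tree_def fun_eq_iff inv option.map_comp comp_def option.map_ident)

lemma conj_tree_eq_Some: "conj_tree s p x = Some y \<longleftrightarrow> p (s x) = Some (s y)"
  by (cases "p (s x)") (auto simp: conj_tree_def inv dest: arg_cong[of _ _ s])

lemma trancl_conj_tree_imp:
  "(x, y) \<in> (parent_rel p)\<^sup>+ \<Longrightarrow> (s x, s y) \<in> (parent_rel (conj_tree s p))\<^sup>+"
proof (induction rule: trancl_induct)
  case (base y)
  then show ?case by (intro r_into_trancl) (simp add: conj_tree_eq_Some inv)
next
  case (step y z)
  then have "(s y, s z) \<in> parent_rel (conj_tree s p)" by (simp add: conj_tree_eq_Some inv)
  with step.IH show ?case by (rule trancl_into_trancl)
qed

lemma trancl_conj_tree:
  "(x, y) \<in> (parent_rel (conj_tree s p))\<^sup>+ \<longleftrightarrow> (s x, s y) \<in> (parent_rel p)\<^sup>+"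
  using trancl_conj_tree_imp[of x y "conj_tree s p"] trancl_conj_tree_imp[of "s x" "s y" p]
  by (auto simp: inv)

lemma rtrancl_conj_tree:
  "(x, y) \<in> (parent_rel (conj_tree s p))\<^sup>* \<longleftrightarrow> (s x, s y) \<in> (parent_rel p)\<^sup>*"
  using trancl_conj_tree[of x y p] inv by (metis rtrancl_eq_or_trancl)

lemma subtree_conj_tree: "subtree (conj_tree s p) w = s ` subtree p (s w)"
proof (intro set_eqI iffI)
  fix x assume "x \<in> subtree (conj_tree s p) w"
  then have "s x \<in> subtree p (s w)" by (simp add: rtrancl_conj_tree)
  then show "x \<in> s ` subtree p (s w)" using inv by (metis image_eqI)
qed (auto simp: rtrancl_conj_tree inv)

lemma search_tree_conj_tree:
  assumes st: "search_tree E V p" and aut: "\<And>x y. E (s x) (s y) = E x y"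
    and sV: "\<And>x. s x \<in> V \<longleftrightarrow> x \<in> V"
  shows "search_tree E V (conj_tree s p)"
proof -
  obtain r where r: "p r = None" "subtree p r = V" by (rule search_tree_root[OF st])
  show ?thesis
  proof (rule search_treeI[of _ _ "s r"])
    show "conj_tree s p x = None" if "x \<notin> V" for x
      using that sV search_tree_outside[OF st] by (simp add: conj_tree_def)
    show "conj_tree s p (s r) = None" using r(1) by (simp add: conj_tree_def inv)
    have "s ` V = V" using sV inv by (metis image_eqI subsetI subset_antisym image_subset_iff)
    then show "subtree (conj_tree s p) (s r) = V" using r(2) by (simp add: subtree_conj_tree inv)
  next
    fix x y assume "x \<in> V" "y \<in> V" "E x y"
    then show "(x, y) \<in> (parent_rel (conj_tree s p))\<^sup>+ \<or> (y, x) \<in> (parent_rel (conj_tree s p))\<^sup>+"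
      using search_tree_edge[OF st, of "s x" "s y"] sV aut by (simp add: trancl_conj_tree)
  next
    fix w assume "w \<in> V"
    then have "connected_on E (s ` subtree p (s w))"
      using search_tree_subtree_connected[OF st] sV aut by (intro connected_on_image) auto
    then show "connected_on E (subtree (conj_tree s p) w)" by (simp add: subtree_conj_tree)
  qed
qed

lemma rot_conj_tree:
  assumes aut: "\<And>x y. E (s x) (s y) = E x y"
  shows "rot E (conj_tree s p) (s a) (s b) = conj_tree s (rot E p a b)"
proof
  fix z
  have s_eq: "s x = s y \<longleftrightarrow> x = y" for x y by (metis inv)
  have z: "z = s (s z)" by (simp add: inv)
  have child: "conj_tree s p z = Some (s b) \<longleftrightarrow> p (s z) = Some b"
    by (simp add: conj_tree_eq_Some inv)
  have moved: "(\<exists>y\<in>subtree (conj_tree s p) z. E (s a) y) \<longleftrightarrow> (\<exists>y\<in>subtree p (s z). E a y)"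
    by (auto simp: subtree_conj_tree aut)
  consider "s z = b" | "s z = a" "a \<noteq> b" | "s z \<noteq> b" "s z \<noteq> a" "p (s z) = Some b"
    | "s z \<noteq> b" "s z \<noteq> a" "p (s z) \<noteq> Some b"
    by blast
  then show "rot E (conj_tree s p) (s a) (s b) z = conj_tree s (rot E p a b) z"
  proof cases
    case 1
    then show ?thesis by (subst z) (simp add: conj_tree_def inv)
  next
    case 2
    then show ?thesis by (subst z) (simp add: conj_tree_def inv s_eq rot_at_a)
  next
    case 3
    then have "z \<noteq> s b" "z \<noteq> s a" using inv by auto
    with 3 child have "rot E (conj_tree s p) (s a) (s b) z =
        (if \<exists>y\<in>subtree (conj_tree s p) z. E (s a) y then Some (s a) else Some (s b))"
      by (simp add: rot_at_child)
    moreover have "rot E p a b (s z) = (if \<exists>y\<in>subtree p (s z). E a y then Some a else Some b)"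
      using 3 by (simp add: rot_at_child)
    ultimately show ?thesis using moved by (simp add: conj_tree_def)
  next
    case 4
    then have "z \<noteq> s b" "z \<noteq> s a" using inv by auto
    with 4 child have "rot E (conj_tree s p) (s a) (s b) z = conj_tree s p z"
      by (simp add: rot_at_other)
    moreover have "rot E p a b (s z) = p (s z)" using 4 by (simp add: rot_at_other)
    ultimately show ?thesis by (simp add: conj_tree_def)
  qed
qed

end

definition twins :: "('a \<Rightarrow> 'a \<Rightarrow> bool) \<Rightarrow> 'a \<Rightarrow> 'a \<Rightarrow> bool" where
  "twins E u v \<longleftrightarrow> u \<noteq> v \<and> E u v \<and> (\<forall>x. x \<noteq> u \<longrightarrow> x \<noteq> v \<longrightarrow> E u x = E v x)"

lemma twins_sym: "symp E \<Longrightarrow> twins E u v \<Longrightarrow> twins E v u"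
  unfolding twins_def by (metis sympD)

lemma transpose_twins_hom:
  assumes "symp E" "irreflp E" "twins E u v"
  shows "E (transpose u v x) (transpose u v y) = E x y"
proof -
  have sym: "E x y = E y x" for x y using assms(1) by (auto dest: sympD)
  have irr: "\<not> E x x" for x using assms(2) by (simp add: irreflp_def)
  have "u \<noteq> v" "E u v" "\<And>x. x \<noteq> u \<Longrightarrow> x \<noteq> v \<Longrightarrow> E u x = E v x"
    using assms(3) by (auto simp: twins_def)
  then show ?thesis unfolding transpose_def using sym irr
    by (cases "x = u"; cases "x = v"; cases "y = u"; cases "y = v") auto
qed

context
  fixes E :: "'a \<Rightarrow> 'a \<Rightarrow> bool" and S :: "'a set" and p :: "'a \<Rightarrow> 'a option" and a b :: 'a
  assumes st: "search_tree E S p" and sym: "symp E" and pb: "p b = Some a" and tw: "twins E a b"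
begin

lemma twin_only_child:
  assumes pc: "p c = Some a"
  shows "c = b"
proof (rule ccontr)
  assume cb: "c \<noteq> b"
  have cyc: "(x, x) \<notin> (parent_rel p)\<^sup>+" for x by (rule search_tree_not_trancl_self[OF st])
  obtain s where sc: "(s, c) \<in> (parent_rel p)\<^sup>*" and "E a s"
    using exists_neighbour_in_child_subtree[OF st sym pc] by auto
  have ca: "(c, a) \<in> parent_rel p" and ba: "(b, a) \<in> parent_rel p" using pc pb by simp_all
  have bc: "(b, c) \<notin> (parent_rel p)\<^sup>*"
  proof
    assume "(b, c) \<in> (parent_rel p)\<^sup>*"
    with cb have "(a, c) \<in> (parent_rel p)\<^sup>*"
      using pb trancl_parent_step[of p b a c] by (simp add: rtrancl_eq_or_trancl)
    with ca cyc show False by (meson rtrancl_into_trancl1)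
  qed
  have "s \<noteq> a" using sc ca cyc by (meson rtrancl_into_trancl1)
  moreover have "s \<noteq> b" using sc bc by blast
  ultimately have "E b s" using tw \<open>E a s\<close> by (simp add: twins_def)
  moreover have "b \<in> S" using search_tree_parent_mem(1)[OF st pb] .
  moreover have "s \<in> S"
    using search_tree_subtree_subset[OF st search_tree_parent_mem(1)[OF st pc]] sc by auto
  ultimately have "(b, s) \<in> (parent_rel p)\<^sup>+ \<or> (s, b) \<in> (parent_rel p)\<^sup>+"
    by (simp add: search_tree_edge[OF st])
  then show False
  proof
    assume "(b, s) \<in> (parent_rel p)\<^sup>+"
    then have "(a, c) \<in> (parent_rel p)\<^sup>*"
      using pb sc trancl_parent_step[of p b a s] by (meson rtrancl_trans)
    with ca cyc show False by (meson rtrancl_into_trancl1)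
  next
    assume "(s, b) \<in> (parent_rel p)\<^sup>+"
    then have "(c, b) \<in> (parent_rel p)\<^sup>*"
      using parent_rel_confluent[OF sc, of b] bc by (auto dest: trancl_into_rtrancl)
    with cb have "(a, b) \<in> (parent_rel p)\<^sup>*"
      using pc trancl_parent_step[of p c a b] by (simp add: rtrancl_eq_or_trancl)
    with ba cyc show False by (meson rtrancl_into_trancl1)
  qed
qed

lemma twin_children_adjacent:
  assumes px: "p x = Some b"
  shows "\<exists>y\<in>subtree p x. E a y"
proof -
  have cyc: "(y, y) \<notin> (parent_rel p)\<^sup>+" for y by (rule search_tree_not_trancl_self[OF st])
  obtain s where sx: "(s, x) \<in> (parent_rel p)\<^sup>*" and "E b s"
    using exists_neighbour_in_child_subtree[OF st sym px] by auto
  have xb: "(x, b) \<in> (parent_rel p)\<^sup>+" using px by auto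
  then have xa: "(x, a) \<in> (parent_rel p)\<^sup>+" using pb by (simp add: trancl_into_trancl)
  have "s \<noteq> b" using sx xb cyc by (meson rtrancl_trancl_trancl)
  moreover have "s \<noteq> a" using sx xa cyc by (meson rtrancl_trancl_trancl)
  ultimately have "E a s" using tw \<open>E b s\<close> by (simp add: twins_def)
  then show ?thesis using sx by auto
qed

lemma rot_twins: "rot E p a b = conj_tree (transpose a b) p"
proof
  fix z
  note acyclic = search_tree_acyclic[OF st]
  have ab: "a \<noteq> b" using tw by (simp add: twins_def)
  have pa: "p a \<noteq> Some a" "p a \<noteq> Some b"
    using acyclic_parent_rel_no_loop[OF acyclic] parent_a_not_b[OF acyclic pb] by auto
  consider "z = b" | "z = a" | "z \<noteq> b" "z \<noteq> a" "p z = Some b" | "z \<noteq> b" "z \<noteq> a" "p z \<noteq> Some b"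
    by blast
  then show "rot E p a b z = conj_tree (transpose a b) p z"
  proof cases
    case 1
    then show ?thesis using pa by (cases "p a") (auto simp: conj_tree_def)
  next
    case 2
    then show ?thesis using ab pb by (simp add: rot_at_a conj_tree_def)
  next
    case 3
    then show ?thesis using twin_children_adjacent by (simp add: rot_at_child conj_tree_def)
  next
    case 4
    moreover have "p z \<noteq> Some a" using 4 twin_only_child by blast
    ultimately show ?thesis by (cases "p z") (auto simp: rot_at_other conj_tree_def)
  qed
qed

end

section \<open>Shortest paths in the rotation graph\<close>

context
  fixes V :: "'a set" and E :: "'a \<Rightarrow> 'a \<Rightarrow> bool" and u v :: 'a
  assumes fin: "finite V" and sym: "symp E" and irr: "irreflp E" and tw: "twins E u v"
    and uV: "u \<in> V" and vV: "v \<in> V"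
begin

lemma stree_swap:
  assumes "stree E V p"
  shows "stree E V (conj_tree (transpose u v) p)"
proof -
  have "transpose u v x \<in> V \<longleftrightarrow> x \<in> V" for x using uV vV by (auto simp: transpose_def)
  then show ?thesis
    using assms search_tree_conj_tree[of "transpose u v" E V p] transpose_twins_hom[OF sym irr tw]
    by (simp add: stree_iff_search_tree[OF fin sym irr])
qed

lemma is_rotation_swap:
  assumes "is_rotation E x a b y"
  shows "is_rotation E (conj_tree (transpose u v) x) (transpose u v a) (transpose u v b)
           (conj_tree (transpose u v) y)"
  using assms rot_conj_tree[of "transpose u v" E x a b] transpose_twins_hom[OF sym irr tw]
  unfolding is_rotation_def by (simp add: conj_tree_eq_Some)

lemma R_edge_swap:
  "R_edge V E x y \<Longrightarrow> R_edge V E (conj_tree (transpose u v) x) (conj_tree (transpose u v) y)"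
  unfolding R_edge_def using stree_swap is_rotation_swap by blast

lemma uv_edge_swaps:
  assumes "R_edge V E x y" "uv_edge E u v x y"
  shows "y = conj_tree (transpose u v) x"
proof -
  obtain a b where ab: "is_pair u v (a, b)" and r: "is_rotation E x a b y \<or> is_rotation E y a b x"
    using assms(2) unfolding uv_edge_def by blast
  have tw': "twins E a b" and swap: "transpose a b = transpose u v"
    using ab tw twins_sym[OF sym tw] transpose_commute[of u v] unfolding is_pair_def by auto
  have st: "search_tree E V x" "search_tree E V y"
    using assms(1) stree_iff_search_tree[OF fin sym irr] unfolding R_edge_def by auto
  from r show ?thesis
  proof
    assume "is_rotation E x a b y"
    then show ?thesis using rot_twins[OF st(1) sym _ tw'] swap unfolding is_rotation_def by simp
  next
    assume "is_rotation E y a b x"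
    then have "x = conj_tree (transpose u v) y"
      using rot_twins[OF st(2) sym _ tw'] swap unfolding is_rotation_def by simp
    then show ?thesis by simp
  qed
qed

text \<open>Relabelling by the transposition the part of a path before its first uv-edge yields a
  path that starts at the relabelled start and ends where the original one does, with that
  edge removed.\<close>

lemma path_from_swapped_start:
  "successively (R_edge V E) (y # zs) \<Longrightarrow> 1 \<le> num_uv_edges E u v (y # zs) \<Longrightarrow>
   \<exists>ws. successively (R_edge V E) (conj_tree (transpose u v) y # ws) \<and>
        last (conj_tree (transpose u v) y # ws) = last (y # zs) \<and> length ws + 1 = length zs"
proof (induction zs arbitrary: y)
  case (Cons z zs)
  have e: "R_edge V E y z" and path: "successively (R_edge V E) (z # zs)" using Cons.prems(1) by auto
  show ?case
  proof (cases "uv_edge E u v y z")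
    case True
    then have "z = conj_tree (transpose u v) y" by (rule uv_edge_swaps[OF e])
    then show ?thesis using path by (intro exI[of _ zs]) (cases zs, auto)
  next
    case False
    with Cons.prems(2) have "1 \<le> num_uv_edges E u v (z # zs)" by (simp add: num_uv_edges_Cons_Cons)
    then obtain ws where ws: "successively (R_edge V E) (conj_tree (transpose u v) z # ws)"
      "last (conj_tree (transpose u v) z # ws) = last (z # zs)" "length ws + 1 = length zs"
      using Cons.IH[OF path] by blast
    then show ?thesis
      using R_edge_swap[OF e] by (intro exI[of _ "conj_tree (transpose u v) z # ws"]) auto
  qed
qed simp

lemma shorter_path_if_two_uv_edges:
  "successively (R_edge V E) xs \<Longrightarrow> 2 \<le> num_uv_edges E u v xs \<Longrightarrow>
   \<exists>ys. ys \<noteq> [] \<and> successively (R_edge V E) ys \<and> hd ys = hd xs \<and> last ys = last xs \<and>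
        length ys < length xs"
proof (induction xs rule: induct_list012)
  case (3 x y zs)
  have e: "R_edge V E x y" and path: "successively (R_edge V E) (y # zs)" using "3.prems"(1) by auto
  show ?case
  proof (cases "uv_edge E u v x y")
    case True
    then have "y = conj_tree (transpose u v) x" by (rule uv_edge_swaps[OF e])
    moreover have "1 \<le> num_uv_edges E u v (y # zs)"
      using "3.prems"(2) True by (simp add: num_uv_edges_Cons_Cons)
    ultimately obtain ws where "successively (R_edge V E) (x # ws)"
      "last (x # ws) = last (y # zs)" "length ws + 1 = length zs"
      using path_from_swapped_start[OF path] by auto
    then show ?thesis by (intro exI[of _ "x # ws"]) auto
  next
    case False
    with "3.prems"(2) have "2 \<le> num_uv_edges E u v (y # zs)" by (simp add: num_uv_edges_Cons_Cons)
    then obtain ys where "ys \<noteq> []" "successively (R_edge V E) ys" "hd ys = y"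
      "last ys = last (y # zs)" "length ys < length (y # zs)"
      using "3.IH"(2)[OF path] by auto
    with e show ?thesis by (intro exI[of _ "x # ys"]) (auto simp: successively_Cons)
  qed
qed simp_all

lemma min_R_path_num_uv_edges_le_1:
  assumes "min_R_path V E xs T T'"
  shows "num_uv_edges E u v xs \<le> 1"
proof (rule ccontr)
  have path: "successively (R_edge V E) xs" and ends: "xs \<noteq> []" "hd xs = T" "last xs = T'"
    and "stree E V T"
    using assms unfolding min_R_path_def R_path_def successively_conv_nth by blast+
  assume "\<not> num_uv_edges E u v xs \<le> 1"
  then obtain ys where ys: "ys \<noteq> []" "successively (R_edge V E) ys" "hd ys = hd xs"
    "last ys = last xs" "length ys < length xs"
    using shorter_path_if_two_uv_edges[OF path] by auto
  then have "R_path V E ys T T'"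
    using ends \<open>stree E V T\<close> unfolding R_path_def successively_conv_nth by simp
  with ys(5) show False using assms unfolding min_R_path_def by fastforce
qed

end

lemma diff_order_iff:
  assumes st: "search_tree E V T" and st': "search_tree E V T'" and "u \<in> V" "v \<in> V" "E u v"
  shows "diff_order T T' u v \<longleftrightarrow> anc T u v \<noteq> anc T' u v"
proof -
  have "anc T u v \<or> anc T v u" "anc T' u v \<or> anc T' v u"
    using search_tree_edge[OF st] search_tree_edge[OF st'] assms(3-5)
    unfolding anc_iff_trancl by blast+
  moreover have "\<not> (anc T u v \<and> anc T v u)" "\<not> (anc T' u v \<and> anc T' v u)"
    using acyclic_trancl_asym[OF search_tree_acyclic[OF st]]
      acyclic_trancl_asym[OF search_tree_acyclic[OF st']] unfolding anc_iff_trancl by blast+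
  ultimately show ?thesis unfolding diff_order_def by blast
qed

lemma same_order_imp_eq:
  assumes st: "search_tree E V T" and st': "search_tree E V T'" and "same_order T T' u v"
  shows "anc T u v = anc T' u v"
  using assms(3) acyclic_trancl_asym[OF search_tree_acyclic[OF st]]
    acyclic_trancl_asym[OF search_tree_acyclic[OF st']]
  unfolding same_order_def anc_iff_trancl by blast

lemma adjacent_diff_order_iff_odd_rotations:
  assumes "finite V" "symp E" "irreflp E" "u \<in> V" "v \<in> V" "E u v"
    and "stree E V T" "stree E V T'"
  shows "diff_order T T' u v \<longleftrightarrow>
    (\<forall>ps. rot_seq V E T ps T' \<longrightarrow> odd (length (filter (is_pair u v) ps)))"
proof -
  have st: "search_tree E V T" "search_tree E V T'"
    using assms(7,8) stree_iff_search_tree[OF assms(1-3)] by simp_all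
  obtain ps0 where "rot_seq V E T ps0 T'" using rot_seq_exists[OF assms(1-3) st(2,1)] by blast
  then show ?thesis
    using diff_order_iff[OF st assms(4-6)] rot_seq_parity[OF assms(1-6)] by blast
qed

lemma twins_if_true_twins:
  assumes "simple_graph V E" "true_twins V E u v" "u \<in> V" "v \<in> V" "u \<noteq> v"
  shows "twins E u v"
proof -
  have EV: "E x y \<Longrightarrow> x \<in> V \<and> y \<in> V" for x y using assms(1) by (auto simp: simple_graph_def)
  have N: "x = u \<or> E u x \<longleftrightarrow> x = v \<or> E v x" if "x \<in> V" for x
    using assms(2) that unfolding true_twins_def by blast
  show ?thesis
    unfolding twins_def using N[of v] N EV assms(4,5) by blast
qed

lemma true_twins_min_R_path:
  assumes "simple_graph V E" "true_twins V E u v" "u \<in> V" "v \<in> V"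
    and "stree E V T'" and min: "min_R_path V E xs T T'"
  shows "(diff_order T T' u v \<longrightarrow> num_uv_edges E u v xs = 1) \<and>
         (same_order T T' u v \<longrightarrow> num_uv_edges E u v xs = 0)"
proof -
  have fin: "finite V" and E: "symp E" "irreflp E"
    using assms(1) by (auto simp: simple_graph_def symp_def irreflp_def)
  have path: "xs \<noteq> []" "successively (R_edge V E) xs" "hd xs = T" "last xs = T'" "stree E V T"
    using min unfolding min_R_path_def R_path_def successively_conv_nth by blast+
  have st: "search_tree E V T" "search_tree E V T'"
    using path(5) assms(5) stree_iff_search_tree[OF fin E] by simp_all
  show ?thesis
  proof (cases "u = v")
    case True
    have "\<not> anc T u u" "\<not> anc T' u u"
      using search_tree_not_trancl_self[OF st(1)] search_tree_not_trancl_self[OF st(2)]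
      by (simp_all add: anc_iff_trancl)
    with True show ?thesis unfolding diff_order_def same_order_def by simp
  next
    case False
    then have tw: "twins E u v" by (rule twins_if_true_twins[OF assms(1-4)])
    then have "E u v" by (simp add: twins_def)
    have "num_uv_edges E u v xs \<le> 1"
      by (rule min_R_path_num_uv_edges_le_1[OF fin E tw assms(3,4) min])
    then have "num_uv_edges E u v xs = 0 \<or> num_uv_edges E u v xs = 1" by auto
    moreover have "anc T u v \<noteq> anc T' u v \<longleftrightarrow> odd (num_uv_edges E u v xs)"
      using R_path_parity[OF fin E assms(3,4) \<open>E u v\<close> path(2,1)] path(3,4) by simp
    ultimately show ?thesis
      using diff_order_iff[OF st assms(3,4) \<open>E u v\<close>] same_order_imp_eq[OF st] by auto
  qed
qed

theorem lemma4p1: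
  fixes V :: "'a set" and E :: "'a \<Rightarrow> 'a \<Rightarrow> bool" and u v :: 'a
  assumes "simple_graph V E" and "connected_on E V" and "u \<in> V" and "v \<in> V"
  shows "(E u v \<longrightarrow> (\<forall>T T'. stree E V T \<and> stree E V T' \<longrightarrow>
            (diff_order T T' u v \<longleftrightarrow>
               (\<forall>ps. rot_seq V E T ps T' \<longrightarrow> odd (length (filter (is_pair u v) ps))))))
       \<and> (true_twins V E u v \<longrightarrow> (\<forall>T T'. stree E V T \<and> stree E V T' \<longrightarrow>
            (\<forall>xs. min_R_path V E xs T T' \<longrightarrow>
               (diff_order T T' u v \<longrightarrow> num_uv_edges E u v xs = 1) \<and>
               (same_order T T' u v \<longrightarrow> num_uv_edges E u v xs = 0))))"
proof -
  have "finite V" "symp E" "irreflp E"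
    using assms(1) by (auto simp: simple_graph_def symp_def irreflp_def)
  then show ?thesis
    using adjacent_diff_order_iff_odd_rotations[of V E u v] true_twins_min_R_path[OF assms(1)]
      assms(3,4) by blast
qed

end
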